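(* Let $f\colon\mathbb{N}\to\mathbb{C}$ be any arithmetic function satisfying \[ \limsup_{r\to\infty} \frac{\|f|_{2^{r+1}}\|_2}{\|f|_{2^r}\|_2}<\infty . \] Then there is a set $\mathcal{G}\subseteq(1,\infty)$ (depending on $f$) whose complement in $(1,\infty)$ has Lebesgue measure zero, such that for every $\alpha\in\mathcal{G}$ and every $\varepsilon>0$ there is $C=C(f,\alpha,\varepsilon)>0$ with \[ \Big| S_\alpha(f,x)-\alpha^{-1}S(f,x)\Big| \le C\, x^{1/2+\varepsilon} M(f,x)\qquad\text{for all real } x\ge 8 . \]
   Context: $\mathbb{N}=\{1,2,3,\dots\}$, $\lfloor \xi\rfloor$ is the integer part of $\xi$, and $\mathcal{B}(\alpha)=\{\lfloor n\alpha\rfloor : n\in\mathbb{N}\}$ for real $\alpha\ge1$. For $x\ge1$: $M(f,x)=1+\max_{1\le m\le x}|f(m)|$, $S_\alpha(f,x)=\sum_{1\le m\le x,\ m\in\mathcal{B}(\alpha)} f(m)$, $S(f,x)=\sum_{1\le m\le x} f(m)$, and $\|f|_x\|_2=\big(\sum_{1\le m\le x}|f(m)|^2\big)^{1/2}$. *)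

theory Defs
  imports "HOL-Analysis.Analysis"
begin

definition beatty :: "real \<Rightarrow> nat set" where
  "beatty \<alpha> = {nat \<lfloor>real n * \<alpha>\<rfloor> | n. n \<ge> 1}"

definition Mf :: "(nat \<Rightarrow> complex) \<Rightarrow> real \<Rightarrow> real" where
  "Mf f x = 1 + Max ((\<lambda>m. cmod (f m)) ` {1..nat \<lfloor>x\<rfloor>})"

definition S_beatty :: "real \<Rightarrow> (nat \<Rightarrow> complex) \<Rightarrow> real \<Rightarrow> complex" where
  "S_beatty \<alpha> f x = (\<Sum>m \<in> {1..nat \<lfloor>x\<rfloor>} \<inter> beatty \<alpha>. f m)"

definition S_full :: "(nat \<Rightarrow> complex) \<Rightarrow> real \<Rightarrow> complex" where
  "S_full f x = (\<Sum>m \<in> {1..nat \<lfloor>x\<rfloor>}. f m)"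

definition norm2_upto :: "(nat \<Rightarrow> complex) \<Rightarrow> real \<Rightarrow> real" where
  "norm2_upto f x = sqrt (\<Sum>m \<in> {1..nat \<lfloor>x\<rfloor>}. (cmod (f m))\<^sup>2)"

end

theory Submission
  imports Defs
begin

(*
  Write \<beta> = 1/\<alpha> and s(t) = \<lceil>t\<rceil> - t - 1/2. An integer m \<ge> 1 lies in B(\<alpha>) exactly when
  [m\<beta>, (m+1)\<beta>) contains an integer, i.e. when \<lceil>(m+1)\<beta>\<rceil> - \<lceil>m\<beta>\<rceil> = 1, so the indicator of B(\<alpha>)
  at m is \<beta> + D_m(\<beta>) with D_m(\<beta>) = s((m+1)\<beta>) - s(m\<beta>), and the error term is
  T(\<beta>,x) = \<Sum>_{m\<le>x} f(m) D_m(\<beta>).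

  Franel's identity \<integral>_0^1 s(a\<beta>) s(b\<beta>) d\<beta> = gcd(a,b)^2/(12ab) and a divisor-sum estimate give the
  mean-square bound \<integral>_0^1 |\<Sum>_{m\<in>A} c_m D_m|^2 \<le> H_{N+1}^2 \<Sum> |c_m|^2 for A \<subseteq> [1,N] (H the harmonic
  numbers). By the Rademacher-Menshov dyadic decomposition |T(\<beta>,X)|^2 for X \<le> 2^(k+1)
  is at most k+2 times a dyadic energy whose integral is O(k^3 \<Sum>_{m\<le>2^(k+1)} |f(m)|^2). Since
  \<Sum> k^(-2) converges, for almost every \<beta> the energy is eventually at most k^5 \<Sum>_{m\<le>2^(k+1)} |f(m)|^2;
  the doubling hypothesis replaces 2^(k+1) by 2^k \<le> x, giving
  |T(\<beta>,x)| = O(x^(1/2+\<epsilon>) M(f,x)).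
  Finally \<alpha> \<mapsto> 1/\<alpha> maps null sets to null sets.
*)

section \<open>Integrals over the unit interval\<close>

lemma bounded_borel_integrable_on:
  fixes f :: "real \<Rightarrow> real"
  assumes "f \<in> borel_measurable borel" "\<And>x. x \<in> {a..b} \<Longrightarrow> \<bar>f x\<bar> \<le> B"
  shows "f integrable_on {a..b}"
proof -
  have "integrable (lebesgue_on {a..b}) f"
  proof (rule finite_measure.integrable_const_bound[where B=B])
    show "finite_measure (lebesgue_on {a..b})"
      by (rule finite_measure_lebesgue_on) (metis cbox_interval lmeasurable_cbox)
    show "AE x in lebesgue_on {a..b}. norm (f x) \<le> B"
      using assms(2) by (auto simp: AE_restrict_space_iff)
    show "f \<in> borel_measurable (lebesgue_on {a..b})"
      using assms(1) by (intro measurable_restrict_space1 measurable_completion) simp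
  qed
  then show ?thesis by (rule integrable_on_lebesgue_on) auto
qed

lemma integral_interval_affine_unit:
  fixes \<phi> :: "real \<Rightarrow> real"
  assumes int: "\<phi> integrable_on {real j / k .. (real j + 1)/k}" and k: "k > 0"
  shows "integral {real j / k .. (real j + 1)/k} \<phi> = integral {0..1} (\<lambda>t. \<phi> ((real j + t)/k)) / k"
proof -
  have h: "(\<phi> has_integral integral {real j / k .. (real j + 1)/k} \<phi>) (cbox (real j / k) ((real j + 1)/k))"
    using int by (simp add: integrable_integral)
  have "((\<lambda>x. \<phi> ((1/k) *\<^sub>R x + real j / k)) has_integral (integral {real j / k .. (real j + 1)/k} \<phi> /\<^sub>R (1/k) ^ DIM(real)))
     (cbox ((real j / k - real j / k) /\<^sub>R (1/k)) (((real j + 1)/k - real j / k) /\<^sub>R (1/k)))"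
    by (rule has_integral_affinity'[OF h]) (use k in auto)
  moreover have "cbox ((real j / k - real j / k) /\<^sub>R (1/k)) (((real j + 1)/k - real j / k) /\<^sub>R (1/k)) = {0..1}"
    using k by (simp add: field_simps)
  moreover have "(\<lambda>x. \<phi> ((1/k) *\<^sub>R x + real j / k)) = (\<lambda>t. \<phi> ((real j + t)/k))"
    using k by (auto simp: field_simps)
  ultimately have "((\<lambda>t. \<phi> ((real j + t)/k)) has_integral (integral {real j / k .. (real j + 1)/k} \<phi> * k)) {0..1}"
    by (simp add: mult.commute)
  then show ?thesis using k by (simp add: integral_unique field_simps)
qed

lemma integral_unit_split:
  fixes \<phi> :: "real \<Rightarrow> real"
  assumes int: "\<phi> integrable_on {0..1}" and k: "k > 0"
  shows "integral {0..1} \<phi> = (\<Sum>j<k. integral {0..1} (\<lambda>t. \<phi> ((real j + t)/k)) / k)"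
proof -
  have kr: "real k > 0" using k by simp
  have "n \<le> k \<Longrightarrow> integral {0..real n / k} \<phi> = (\<Sum>j<n. integral {0..1} (\<lambda>t. \<phi> ((real j + t)/k)) / k)" for n
  proof (induction n)
    case 0 then show ?case by simp
  next
    case (Suc n)
    have sub: "{0..real (Suc n)/k} \<subseteq> {0..1}" using Suc.prems kr by (auto simp: field_simps)
    have i1: "\<phi> integrable_on {0..real (Suc n)/k}" by (rule integrable_subinterval_real[OF int sub])
    have "integral {0..real n / k} \<phi> + integral {real n / k..real (Suc n)/k} \<phi> = integral {0..real (Suc n)/k} \<phi>"
      by (rule Henstock_Kurzweil_Integration.integral_combine[OF _ _ i1]) (use kr in \<open>auto simp: divide_right_mono\<close>)
    moreover have "integral {real n / k..real (Suc n)/k} \<phi> = integral {0..1} (\<lambda>t. \<phi> ((real n + t)/k)) / k"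
    proof -
      have "{real n / k..(real n + 1)/k} \<subseteq> {0..1}" using sub kr by (auto simp: field_simps)
      then have "\<phi> integrable_on {real n / k..(real n + 1)/k}" using int integrable_subinterval_real by blast
      from integral_interval_affine_unit[OF this kr] show ?thesis by (simp add: add.commute)
    qed
    ultimately show ?case using Suc by simp
  qed
  from this[of k] show ?thesis using kr by simp
qed

lemma borel_measurable_compose_affine:
  fixes \<phi> :: "real \<Rightarrow> real"
  assumes "\<phi> \<in> borel_measurable borel"
  shows "(\<lambda>u. \<phi> (c * u + d)) \<in> borel_measurable borel"
  using assms by (rule measurable_compose[rotated]) simp

lemma integral_unit_periodic_dilate:
  fixes \<phi> :: "real \<Rightarrow> real"
  assumes per: "\<And>x. \<phi> (x + 1) = \<phi> x" and meas: "\<phi> \<in> borel_measurable borel"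
    and bd: "\<And>x. \<bar>\<phi> x\<bar> \<le> B" and k: "k > 0"
  shows "integral {0..1} (\<lambda>u. \<phi> (real k * u)) = integral {0..1} \<phi>"
proof -
  have pj: "\<phi> (real j + t) = \<phi> t" for j t
  proof (induction j)
    case (Suc j)
    have "\<phi> (real (Suc j) + t) = \<phi> ((real j + t) + 1)" by (simp add: algebra_simps)
    then show ?case using per Suc by simp
  qed simp
  have m2: "(\<lambda>u. \<phi> (real k * u)) \<in> borel_measurable borel"
    using borel_measurable_compose_affine[OF meas, of "real k" 0] by simp
  have int: "(\<lambda>u. \<phi> (real k * u)) integrable_on {0..1}"
    by (rule bounded_borel_integrable_on[OF m2]) (use bd in auto)
  have "integral {0..1} (\<lambda>u. \<phi> (real k * u)) = (\<Sum>j<k. integral {0..1} (\<lambda>t. \<phi> (real k * ((real j + t)/k))) / k)"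
    by (rule integral_unit_split[OF int k])
  also have "\<dots> = (\<Sum>j<k. integral {0..1} \<phi> / k)"
    using k pj by (intro sum.cong refl) simp
  also have "\<dots> = integral {0..1} \<phi>" using k by simp
  finally show ?thesis .
qed

lemma has_integral_id_unit: "((\<lambda>t::real. t) has_integral 1/2) {0..1}"
proof -
  have "((\<lambda>t::real. t) has_integral ((\<lambda>t. t^2/2) 1 - (\<lambda>t. t^2/2) 0)) {0..1}"
    by (rule fundamental_theorem_of_calculus)
       (auto intro!: derivative_eq_intros simp: has_real_derivative_iff_has_vector_derivative[symmetric])
  then show ?thesis by simp
qed

lemma has_integral_square_unit: "((\<lambda>t::real. t^2) has_integral 1/3) {0..1}"
proof -
  have "((\<lambda>t::real. t^2) has_integral ((\<lambda>t. t^3/3) 1 - (\<lambda>t. t^3/3) 0)) {0..1}"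
    by (rule fundamental_theorem_of_calculus)
       (auto intro!: derivative_eq_intros simp: has_real_derivative_iff_has_vector_derivative[symmetric] power2_eq_square)
  then show ?thesis by simp
qed

lemma integral_unit_reflect:
  fixes \<phi> :: "real \<Rightarrow> real"
  assumes m: "\<phi> \<in> borel_measurable borel" and bd: "\<And>x. \<bar>\<phi> x\<bar> \<le> B"
  shows "integral {0..1} (\<lambda>u. \<phi> (1 - u)) = integral {0..1} \<phi>"
proof -
  define \<psi> where "\<psi> = (\<lambda>x. \<phi> (-x))"
  have mp: "\<psi> \<in> borel_measurable borel" unfolding \<psi>_def using borel_measurable_compose_affine[OF m, of "-1" 0] by simp
  have i: "\<psi> integrable_on {-1..0}" by (rule bounded_borel_integrable_on[OF mp, where B=B]) (simp add: \<psi>_def bd)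
  have "(\<psi> has_integral integral {-1..0} \<psi>) (cbox (-1) 0)" using i by (simp add: integrable_integral)
  from has_integral_affinity'[OF this, of 1 "-1"]
  have "((\<lambda>x. \<psi> (x - 1)) has_integral integral {-1..0} \<psi>) {0..1}" by simp
  then have "integral {0..1} (\<lambda>u. \<phi> (1 - u)) = integral {-1..0} \<psi>"
    by (simp add: integral_unique \<psi>_def)
  also have "\<dots> = integral {0..1} \<phi>"
    using Henstock_Kurzweil_Integration.integral_reflect_real[of 1 0 \<phi>] by (simp add: \<psi>_def)
  finally show ?thesis .
qed

section \<open>Franel's identity\<close>

lemma frac_of_nat_add: "frac (real j + t) = frac t"
  by (simp add: frac_def)

lemma abs_frac_le_1: "\<bar>frac (x::real)\<bar> \<le> 1"
  using frac_lt_1[of x] by simp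

lemma borel_measurable_frac_affine: "(\<lambda>u::real. frac (c * u + d)) \<in> borel_measurable borel"
  unfolding frac_def by measurable

lemma integral_frac_unit: "integral {0..1} (\<lambda>u::real. frac u) = 1/2"
proof -
  have "integral {0..1} (\<lambda>u::real. frac u) = integral {0..1} (\<lambda>u. u)"
    by (rule integral_spike[of "{1}"]) (auto simp: frac_eq)
  then show ?thesis using has_integral_id_unit by (simp add: integral_unique)
qed

lemma integral_frac_dilate: "k > 0 \<Longrightarrow> integral {0..1} (\<lambda>u. frac (real k * u)) = 1/2"
proof -
  assume k: "k > 0"
  have m: "(frac :: real \<Rightarrow> real) \<in> borel_measurable borel" using borel_measurable_frac_affine[of 1 0] by simp
  show ?thesis using integral_unit_periodic_dilate[of frac, OF frac_1_eq m abs_frac_le_1 k] integral_frac_unit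
    by simp
qed

lemma sum_of_nat_lessThan: "(\<Sum>r<a. real r) = real a * (real a - 1) / 2"
  by (induction a) (auto simp: field_simps)

lemma hermite_identity_nat: "(a::nat) > 0 \<Longrightarrow> (\<Sum>r<a. (n + r) div a) = n"
proof (induction n)
  case 0 then show ?case by simp
next
  case (Suc n)
  have "(\<Sum>r<a. (Suc n + r) div a) = (\<Sum>r<a. (n + Suc r) div a)" by simp
  also have "\<dots> = (\<Sum>r<Suc a. (n + r) div a) - (n + 0) div a"
    by (subst sum.lessThan_Suc_shift) simp
  also have "\<dots> = (\<Sum>r<a. (n + r) div a) + (n + a) div a - n div a" by simp
  also have "\<dots> = Suc n" using Suc by simp
  finally show ?case .
qed

lemma hermite_identity_frac:
  assumes a: "(a::nat) > 0" and y: "y \<ge> 0"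
  shows "(\<Sum>r<a. frac ((real r + y)/a)) = frac y + (real a - 1)/2"
proof -
  define n where "n = nat \<lfloor>y\<rfloor>"
  have yn: "\<lfloor>y\<rfloor> = int n" using y by (simp add: n_def)
  have fl: "\<lfloor>(real r + y)/a\<rfloor> = int ((n + r) div a)" for r
  proof -
    have "\<lfloor>(real r + y)/ real_of_int (int a)\<rfloor> = \<lfloor>real r + y\<rfloor> div int a"
      by (rule floor_divide_real_eq_div) simp
    also have "\<lfloor>real r + y\<rfloor> = int r + int n" using yn by simp
    finally show ?thesis by (simp add: zdiv_int add.commute)
  qed
  have "(\<Sum>r<a. frac ((real r + y)/a)) = (\<Sum>r<a. (real r + y)/a) - (\<Sum>r<a. real ((n + r) div a))"
    by (simp add: frac_def fl sum_subtractf)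
  also have "(\<Sum>r<a. real ((n + r) div a)) = real n"
    using hermite_identity_nat[OF a, of n] by (metis of_nat_sum)
  also have "(\<Sum>r<a. (real r + y)/a) = ((\<Sum>r<a. real r) + a * y) / a"
    by (simp add: sum_divide_distrib[symmetric] sum.distrib)
  also have "\<dots> = (real a - 1)/2 + y"
    using a by (simp add: sum_of_nat_lessThan field_simps)
  finally show ?thesis using yn by (simp add: frac_def)
qed

lemma integrable_frac_mult_frac: "(\<lambda>u::real. frac (a * u) * frac (b * u)) integrable_on {0..1}"
proof (rule bounded_borel_integrable_on[where B=1])
  show "(\<lambda>u::real. frac (a * u) * frac (b * u)) \<in> borel_measurable borel" unfolding frac_def by measurable
  show "\<bar>frac (a * x) * frac (b * x)\<bar> \<le> 1" for x
    using abs_frac_le_1[of "a*x"] abs_frac_le_1[of "b*x"] by (simp add: abs_mult mult_le_one)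
qed

lemma integrable_frac_dilate: "(\<lambda>u::real. frac (a * u)) integrable_on {0..1}"
  by (rule bounded_borel_integrable_on[where B=1]) (auto simp: borel_measurable_frac_affine[of a 0, simplified] intro: less_imp_le[OF frac_lt_1])

lemma integrable_id_mult_frac: "(\<lambda>t::real. t * frac (a * t)) integrable_on {0..1}"
proof (rule bounded_borel_integrable_on[where B=1])
  show "(\<lambda>u::real. u * frac (a * u)) \<in> borel_measurable borel" unfolding frac_def by measurable
  show "x \<in> {0..1} \<Longrightarrow> \<bar>x * frac (a * x)\<bar> \<le> 1" for x
    using abs_frac_le_1[of "a*x"] by (simp add: abs_mult mult_le_one)
qed

lemma integral_id_mult_frac_dilate:
  assumes b: "b > 0"
  shows "integral {0..1} (\<lambda>t. t * frac (real b * t)) = 1/4 + 1/(12 * real b)"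
proof -
  have br: "real b > 0" using b by simp
  have "integral {0..1} (\<lambda>t. t * frac (real b * t)) =
        (\<Sum>j<b. integral {0..1} (\<lambda>t. ((real j + t)/b) * frac (real b * ((real j + t)/b))) / b)"
    by (rule integral_unit_split[OF integrable_id_mult_frac b])
  also have "\<dots> = (\<Sum>j<b. (real j / (2 * b) + 1 / (3 * b)) / b)"
  proof (intro sum.cong refl)
    fix j assume "j \<in> {..<b}"
    have "integral {0..1} (\<lambda>t. ((real j + t)/b) * frac (real b * ((real j + t)/b)))
        = integral {0..1} (\<lambda>t. (real j / b) * t + (1/b) * t^2)"
    proof (rule integral_spike[of "{1}"])
      fix t :: real assume t: "t \<in> {0..1} - {1}"
      have "real b * ((real j + t)/b) = real j + t" using br by simp
      then have "frac (real b * ((real j + t)/b)) = t" using t by (simp add: frac_of_nat_add frac_eq)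
      then show "(real j / b) * t + (1/b) * t^2 = ((real j + t)/b) * frac (real b * ((real j + t)/b))"
        using br by (simp add: power2_eq_square add_divide_distrib algebra_simps)
    qed simp
    also have "\<dots> = real j / (2 * b) + 1 / (3 * b)"
    proof -
      have "((\<lambda>t. (real j / b) * t + (1/b) * t^2) has_integral ((real j / b) * (1/2) + (1/b) * (1/3))) {0..1}"
        by (intro has_integral_add has_integral_mult_right has_integral_id_unit has_integral_square_unit)
      then show ?thesis by (simp add: integral_unique)
    qed
    finally show "integral {0..1} (\<lambda>t. ((real j + t)/b) * frac (real b * ((real j + t)/b))) / b
        = (real j / (2 * b) + 1 / (3 * b)) / b" by simp
  qed
  also have "\<dots> = ((\<Sum>j<b. real j) / (2*b) + b / (3*b)) / b"
    by (simp add: sum_divide_distrib[symmetric] sum.distrib)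
  also have "\<dots> = 1/4 + 1/(12 * real b)"
    using br by (simp add: sum_of_nat_lessThan field_simps)
  finally show ?thesis .
qed

lemma sum_reindex_mult_mod:
  fixes a b :: nat
  assumes cop: "coprime a b" and a: "a > 0"
  shows "(\<Sum>j<a. h ((b*j) mod a)) = (\<Sum>r<a. h r)"
proof -
  have inj: "inj_on (\<lambda>j. (b*j) mod a) {..<a}"
  proof (rule inj_onI)
    fix x y assume xy: "x \<in> {..<a}" "y \<in> {..<a}" "(b*x) mod a = (b*y) mod a"
    have key: "x \<le> y \<Longrightarrow> (b*x) mod a = (b*y) mod a \<Longrightarrow> x = y" if "x < a" "y < a" for x y
    proof -
      assume le: "x \<le> y" and e: "(b*x) mod a = (b*y) mod a"
      have "b*x \<le> b*y" using le by simp
      then have "a dvd b*y - b*x" using e mod_eq_dvd_iff_nat[of "b*x" "b*y" a] by simp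
      then have "a dvd b*(y - x)" by (simp add: diff_mult_distrib2)
      then have "a dvd (y - x)" using cop by (simp add: coprime_dvd_mult_right_iff)
      moreover have "y - x < a" using that by simp
      ultimately have "y - x = 0" by (cases "y - x = 0") (auto dest: dvd_imp_le)
      then show "x = y" using le by simp
    qed
    have xa: "x < a" "y < a" using xy(1,2) by auto
    show "x = y"
    proof (cases "x \<le> y")
      case True then show ?thesis using key[OF xa True xy(3)] by simp
    next
      case False then have "y \<le> x" by simp
      then show ?thesis using key[OF xa(2,1) _ xy(3)[symmetric]] by simp
    qed
  qed
  have img: "(\<lambda>j. (b*j) mod a) ` {..<a} = {..<a}"
    by (rule endo_inj_surj[OF _ _ inj]) (use a in \<open>auto intro: mod_less_divisor\<close>)
  have "(\<Sum>r<a. h r) = (\<Sum>r\<in>(\<lambda>j. (b*j) mod a) ` {..<a}. h r)" by (simp add: img)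
  also have "\<dots> = (\<Sum>j<a. h ((b*j) mod a))" by (simp add: sum.reindex[OF inj])
  finally show ?thesis by simp
qed

lemma frac_mult_shift_eq_mod:
  assumes a: "a > 0"
  shows "frac (real b * ((real j + t)/a)) = frac ((real ((b*j) mod a) + real b * t)/a)"
proof -
  have "real (b*j) = real a * real (b*j div a) + real ((b*j) mod a)"
    by (metis div_mult_mod_eq of_nat_add of_nat_mult mult.commute)
  then have "real b * ((real j + t)/a) = real (b*j div a) + (real ((b*j) mod a) + real b * t)/a"
    using a by (simp add: field_simps)
  then show ?thesis by (simp only: frac_of_nat_add)
qed

lemma sum_frac_mult_mod_coprime:
  assumes a: "a > 0" and cop: "coprime a b" and y: "y \<ge> 0"
  shows "(\<Sum>j<a. frac ((real ((b*j) mod a) + y)/a)) = frac y + (real a - 1)/2"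
  using sum_reindex_mult_mod[OF cop a, of "\<lambda>r. frac ((real r + y)/a)"] hermite_identity_frac[OF a y]
  by simp

lemma franel_integral_coprime:
  assumes a: "a > 0" and b: "b > 0" and cop: "coprime a b"
  shows "integral {0..1} (\<lambda>u. frac (real a * u) * frac (real b * u)) = 1/4 + 1/(12 * real a * real b)"
proof -
  have ar: "real a > 0" and br: "real b > 0" using a b by auto
  let ?g = "\<lambda>j t. t * frac ((real ((b*j) mod a) + real b * t)/a)"
  have gint: "?g j integrable_on {0..1}" for j
  proof (rule bounded_borel_integrable_on[where B=1])
    show "?g j \<in> borel_measurable borel" unfolding frac_def by measurable
    show "x \<in> {0..1} \<Longrightarrow> \<bar>?g j x\<bar> \<le> 1" for x
      using abs_frac_le_1[of "(real ((b*j) mod a) + real b * x)/a"] by (simp add: abs_mult mult_le_one)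
  qed
  have "integral {0..1} (\<lambda>u. frac (real a * u) * frac (real b * u)) =
        (\<Sum>j<a. integral {0..1} (\<lambda>t. frac (real a * ((real j + t)/a)) * frac (real b * ((real j + t)/a))) / a)"
    by (rule integral_unit_split[OF integrable_frac_mult_frac a])
  also have "\<dots> = (\<Sum>j<a. integral {0..1} (?g j) / a)"
  proof (intro sum.cong refl arg_cong2[where f="(/)"])
    fix j
    show "integral {0..1} (\<lambda>t. frac (real a * ((real j + t)/a)) * frac (real b * ((real j + t)/a))) = integral {0..1} (?g j)"
    proof (rule integral_spike[of "{1}"])
      fix t :: real assume t: "t \<in> {0..1} - {1}"
      have "real a * ((real j + t)/a) = real j + t" using ar by simp
      then have "frac (real a * ((real j + t)/a)) = t" using t by (simp add: frac_of_nat_add frac_eq)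
      moreover note frac_mult_shift_eq_mod[OF a, of b j t]
      ultimately show "?g j t = frac (real a * ((real j + t)/a)) * frac (real b * ((real j + t)/a))"
        by simp
    qed simp
  qed
  also have "\<dots> = integral {0..1} (\<lambda>t. \<Sum>j<a. ?g j t) / a"
    by (simp add: integral_sum[OF _ gint] sum_divide_distrib)
  also have "integral {0..1} (\<lambda>t. \<Sum>j<a. ?g j t) = integral {0..1} (\<lambda>t. t * frac (real b * t) + ((real a - 1)/2) * t)"
  proof (rule integral_cong)
    fix t :: real assume t: "t \<in> {0..1}"
    have "(\<Sum>j<a. ?g j t) = t * (\<Sum>j<a. frac ((real ((b*j) mod a) + real b * t)/a))"
      by (simp add: sum_distrib_left)
    also have "\<dots> = t * (frac (real b * t) + (real a - 1)/2)"
      using t by (simp add: sum_frac_mult_mod_coprime[OF a cop])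
    finally show "(\<Sum>j<a. ?g j t) = t * frac (real b * t) + ((real a - 1)/2) * t" by (simp add: algebra_simps)
  qed
  also have "\<dots> = integral {0..1} (\<lambda>t. t * frac (real b * t)) + ((real a - 1)/2) * (1/2)"
  proof -
    have "((\<lambda>t. t * frac (real b * t) + ((real a - 1)/2) * t) has_integral
           (integral {0..1} (\<lambda>t. t * frac (real b * t)) + ((real a - 1)/2) * (1/2))) {0..1}"
      by (intro has_integral_add has_integral_mult_right has_integral_id_unit integrable_integral integrable_id_mult_frac)
    then show ?thesis by (simp add: integral_unique)
  qed
  also have "\<dots> = 1/4 + 1/(12 * real b) + (real a - 1)/4" using integral_id_mult_frac_dilate[OF b] by simp
  finally show ?thesis using ar br by (simp add: field_simps)
qed

lemma franel_integral:
  assumes a: "a > 0" and b: "b > 0"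
  shows "integral {0..1} (\<lambda>u. frac (real a * u) * frac (real b * u)) = 1/4 + real (gcd a b)^2/(12 * real a * real b)"
proof -
  define d where "d = gcd a b"
  define a' where "a' = a div d"
  define b' where "b' = b div d"
  have d: "d > 0" using a by (simp add: d_def)
  have cop: "coprime a' b'" unfolding a'_def b'_def d_def by (rule div_gcd_coprime) (use a in auto)
  have aa: "a = d * a'" unfolding a'_def d_def by simp
  have bb: "b = d * b'" unfolding b'_def d_def by simp
  have a': "a' > 0" and b': "b' > 0" using aa bb a b by auto
  define \<phi> where "\<phi> = (\<lambda>v. frac (real a' * v) * frac (real b' * v))"
  have per: "\<phi> (x + 1) = \<phi> x" for x
    unfolding \<phi>_def by (simp add: distrib_left frac_of_nat_add add.commute[of _ "real a'"] add.commute[of _ "real b'"])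
  have m: "\<phi> \<in> borel_measurable borel" unfolding \<phi>_def frac_def by measurable
  have bd: "\<bar>\<phi> x\<bar> \<le> 1" for x
    unfolding \<phi>_def using abs_frac_le_1[of "a'*x"] abs_frac_le_1[of "b'*x"] by (simp add: abs_mult mult_le_one)
  have "integral {0..1} (\<lambda>u. frac (real a * u) * frac (real b * u)) = integral {0..1} (\<lambda>u. \<phi> (real d * u))"
    unfolding \<phi>_def aa bb by (simp add: mult.assoc mult.left_commute)
  also have "\<dots> = integral {0..1} \<phi>" by (rule integral_unit_periodic_dilate[OF per m bd d])
  also have "\<dots> = 1/4 + 1/(12 * real a' * real b')" unfolding \<phi>_def by (rule franel_integral_coprime[OF a' b' cop])
  also have "\<dots> = 1/4 + real d^2/(12 * real a * real b)"
    using d a' b' by (simp add: aa bb field_simps power2_eq_square)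
  finally show ?thesis by (simp add: d_def)
qed

text \<open>Since \<open>frac (-t) = \<lceil>t\<rceil> - t\<close>, this is \<open>s(k\<beta>)\<close> with \<open>s(t) = \<lceil>t\<rceil> - t - 1/2\<close>.\<close>

definition sawtooth :: "nat \<Rightarrow> real \<Rightarrow> real" where
  "sawtooth k \<beta> = frac (- (real k * \<beta>)) - 1/2"

lemma sawtooth_borel[measurable]: "sawtooth k \<in> borel_measurable borel"
  unfolding sawtooth_def frac_def by measurable

lemma abs_sawtooth_le: "\<bar>sawtooth k \<beta>\<bar> \<le> 1/2"
proof -
  have h: "0 \<le> frac (- (real k * \<beta>)) \<and> frac (- (real k * \<beta>)) < 1" using frac_lt_1 by simp
  show ?thesis unfolding sawtooth_def abs_le_iff using h by linarith
qed

definition franel :: "nat \<Rightarrow> nat \<Rightarrow> real" where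
  "franel a b = real (gcd a b)^2 / (12 * real a * real b)"

lemma franel_nonneg: "franel a b \<ge> 0" unfolding franel_def by simp

lemma franel_commute: "franel a b = franel b a" unfolding franel_def by (simp add: gcd.commute mult.commute mult.left_commute)

lemma integral_sawtooth_mult_sawtooth:
  assumes a: "a > 0" and b: "b > 0"
  shows "integral {0..1} (\<lambda>\<beta>. sawtooth a \<beta> * sawtooth b \<beta>) = franel a b"
proof -
  have r: "sawtooth k (1 - u) = frac (real k * u) - 1/2" for k u
  proof -
    have "- (real k * (1 - u)) = real_of_int (- int k) + real k * u" by (simp add: algebra_simps)
    then show ?thesis unfolding sawtooth_def by (simp only: frac_add_of_int_left)
  qed
  have "integral {0..1} (\<lambda>\<beta>. sawtooth a \<beta> * sawtooth b \<beta>) = integral {0..1} (\<lambda>u. sawtooth a (1 - u) * sawtooth b (1 - u))"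
  proof (rule integral_unit_reflect[symmetric, where B=1])
    show "(\<lambda>\<beta>. sawtooth a \<beta> * sawtooth b \<beta>) \<in> borel_measurable borel" by measurable
    show "\<bar>sawtooth a x * sawtooth b x\<bar> \<le> 1" for x
      using abs_sawtooth_le[of a x] abs_sawtooth_le[of b x] by (simp add: abs_mult mult_le_one)
  qed
  also have "\<dots> = integral {0..1} (\<lambda>u. frac (real a * u) * frac (real b * u) - (1/2) * frac (real a * u) - (1/2) * frac (real b * u) + 1/4)"
    by (simp add: r algebra_simps)
  also have "\<dots> = (1/4 + real (gcd a b)^2/(12 * real a * real b)) - (1/2) * (1/2) - (1/2) * (1/2) + 1/4"
  proof -
    have "((\<lambda>u. frac (real a * u) * frac (real b * u) - (1/2) * frac (real a * u) - (1/2) * frac (real b * u) + 1/4) has_integral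
      ((1/4 + real (gcd a b)^2/(12 * real a * real b)) - (1/2) * (1/2) - (1/2) * (1/2) + 1/4 * (1 - 0))) {0..1}"
    proof (intro has_integral_add has_integral_diff has_integral_mult_right has_integral_const_real)
      show "((\<lambda>u. frac (real a * u) * frac (real b * u)) has_integral 1/4 + real (gcd a b)^2/(12 * real a * real b)) {0..1}"
        using integrable_integral[OF integrable_frac_mult_frac[of "real a" "real b"]] franel_integral[OF a b] by simp
      show "((\<lambda>u. frac (real a * u)) has_integral 1/2) {0..1}"
        using integrable_integral[OF integrable_frac_dilate[of "real a"]] integral_frac_dilate[OF a] by simp
      show "((\<lambda>u. frac (real b * u)) has_integral 1/2) {0..1}"
        using integrable_integral[OF integrable_frac_dilate[of "real b"]] integral_frac_dilate[OF b] by simp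
      show "((\<lambda>x. 1/4::real) has_integral 1/4 * (1 - 0)) {0..1::real}"
        using has_integral_const_real[of "1/4::real" 0 1] by simp
    qed
    then show ?thesis by (simp add: integral_unique)
  qed
  finally show ?thesis by (simp add: franel_def)
qed

section \<open>Mean square of sums of sawtooth differences\<close>

definition sawtooth_diff :: "nat \<Rightarrow> real \<Rightarrow> real" where
  "sawtooth_diff m \<beta> = sawtooth (m+1) \<beta> - sawtooth m \<beta>"

lemma sawtooth_diff_borel[measurable]: "sawtooth_diff m \<in> borel_measurable borel"
  unfolding sawtooth_diff_def by measurable

lemma abs_sawtooth_diff_le: "\<bar>sawtooth_diff m \<beta>\<bar> \<le> 1"
  unfolding sawtooth_diff_def using abs_sawtooth_le[of "m+1" \<beta>] abs_sawtooth_le[of m \<beta>] by linarith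

lemma integrable_sawtooth_mult_sawtooth: "(\<lambda>\<beta>. sawtooth a \<beta> * sawtooth b \<beta>) integrable_on {0..1}"
proof (rule bounded_borel_integrable_on[where B=1])
  show "(\<lambda>\<beta>. sawtooth a \<beta> * sawtooth b \<beta>) \<in> borel_measurable borel" by measurable
  show "\<bar>sawtooth a x * sawtooth b x\<bar> \<le> 1" for x
    using abs_sawtooth_le[of a x] abs_sawtooth_le[of b x] by (simp add: abs_mult mult_le_one)
qed

lemma integral_sawtooth_diff_mult:
  assumes m: "m > 0" and n: "n > 0"
  shows "integral {0..1} (\<lambda>\<beta>. sawtooth_diff m \<beta> * sawtooth_diff n \<beta>) = franel (m+1) (n+1) - franel (m+1) n - franel m (n+1) + franel m n"
proof -
  have e: "(\<lambda>\<beta>. sawtooth_diff m \<beta> * sawtooth_diff n \<beta>) = (\<lambda>\<beta>. sawtooth (m+1) \<beta> * sawtooth (n+1) \<beta> - sawtooth (m+1) \<beta> * sawtooth n \<beta> - sawtooth m \<beta> * sawtooth (n+1) \<beta> + sawtooth m \<beta> * sawtooth n \<beta>)"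
    by (auto simp: sawtooth_diff_def algebra_simps)
  have h: "((\<lambda>\<beta>. sawtooth a \<beta> * sawtooth b \<beta>) has_integral franel a b) {0..1}" if "a > 0" "b > 0" for a b
    using integrable_integral[OF integrable_sawtooth_mult_sawtooth[of a b]] integral_sawtooth_mult_sawtooth[OF that] by (simp add: franel_def)
  have "((\<lambda>\<beta>. sawtooth_diff m \<beta> * sawtooth_diff n \<beta>) has_integral (franel (m+1) (n+1) - franel (m+1) n - franel m (n+1) + franel m n)) {0..1}"
    unfolding e by (intro has_integral_add has_integral_diff h) (use m n in auto)
  then show ?thesis by (simp add: integral_unique)
qed

definition franel_corners :: "nat \<Rightarrow> nat \<Rightarrow> real" where
  "franel_corners m n = franel (m+1) (n+1) + franel (m+1) n + franel m (n+1) + franel m n"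

lemma franel_corners_commute: "franel_corners m n = franel_corners n m" unfolding franel_corners_def by (simp add: franel_commute)
lemma franel_corners_nonneg: "franel_corners m n \<ge> 0" unfolding franel_corners_def by (simp add: franel_nonneg)

lemma abs_integral_sawtooth_diff_mult_le:
  assumes "m > 0" "n > 0"
  shows "\<bar>integral {0..1} (\<lambda>\<beta>. sawtooth_diff m \<beta> * sawtooth_diff n \<beta>)\<bar> \<le> franel_corners m n"
  using franel_nonneg[of "m+1" "n+1"] franel_nonneg[of "m+1" n] franel_nonneg[of m "n+1"] franel_nonneg[of m n]
  unfolding integral_sawtooth_diff_mult[OF assms] franel_corners_def by linarith

lemma harm_pow2_le: "harm (2^k) \<le> real k + 1"
proof (induction k)
  case 0 then show ?case by (simp add: harm_def)
next
  case (Suc k)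
  have split: "{1..2^Suc k} = {1..(2::nat)^k} \<union> {2^k<..2^Suc k}" by auto
  have "harm (2^Suc k) = harm (2^k) + (\<Sum>j\<in>{2^k<..2^Suc k}. 1 / real j)"
    unfolding harm_def split by (subst sum.union_disjoint) (auto simp: inverse_eq_divide)
  also have "(\<Sum>j\<in>{(2::nat)^k<..2^Suc k}. 1 / real j) \<le> real (card {(2::nat)^k<..2^Suc k}) * (1 / 2^k)"
  proof (rule sum_bounded_above)
    fix j assume "j \<in> {(2::nat)^k<..2^Suc k}"
    then have "real j \<ge> 2^k" by (simp add: less_imp_le)
    then show "1 / real j \<le> 1 / 2^k" by (simp add: frac_le)
  qed
  also have "\<dots> = 1" by simp
  finally show ?case using Suc by simp
qed

lemma sum_inverse_image_le_harm:
  assumes fin: "finite S" and inj: "inj_on g S" and img: "g ` S \<subseteq> {1..M}"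
    and f: "\<And>k. k \<in> S \<Longrightarrow> f k = 1 / real (g k)"
  shows "(\<Sum>k\<in>S. f k) \<le> harm M"
proof -
  have "(\<Sum>k\<in>S. f k) = (\<Sum>k\<in>S. 1 / real (g k))" using f by simp
  also have "\<dots> = (\<Sum>i\<in>g ` S. 1 / real i)" by (simp add: sum.reindex[OF inj])
  also have "\<dots> \<le> (\<Sum>i\<in>{1..M}. 1 / real i)" by (rule sum_mono2[OF _ img]) auto
  finally show ?thesis by (simp add: harm_def inverse_eq_divide)
qed

lemma sum_multiples_le_harm:
  assumes d: "d > 0"
  shows "(\<Sum>k | k \<in> {1..M} \<and> d dvd k. real d / real k) \<le> harm M"
proof (rule sum_inverse_image_le_harm[where g="\<lambda>k. k div d"])
  show "inj_on (\<lambda>k. k div d) {k. k \<in> {1..M} \<and> d dvd k}"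
    by (rule inj_onI) (auto elim!: dvdE simp: d)
  show "(\<lambda>k. k div d) ` {k. k \<in> {1..M} \<and> d dvd k} \<subseteq> {1..M}"
  proof
    fix i assume "i \<in> (\<lambda>k. k div d) ` {k. k \<in> {1..M} \<and> d dvd k}"
    then obtain q where "d * q \<in> {1..M}" "i = q" using d by (auto elim!: dvdE)
    moreover have "q \<le> d * q" using d by simp
    ultimately show "i \<in> {1..M}" by (cases q) auto
  qed
  show "real d / real k = 1 / real (k div d)" if "k \<in> {k. k \<in> {1..M} \<and> d dvd k}" for k
    using that d by (auto elim!: dvdE)
qed simp

lemma sum_divisors_le_harm:
  assumes p: "p > 0"
  shows "(\<Sum>d | d dvd p. real d / real p) \<le> harm p"
proof (rule sum_inverse_image_le_harm[where g="\<lambda>d. p div d"])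
  show "finite {d. d dvd p}" using p by simp
  show "inj_on (\<lambda>d. p div d) {d. d dvd p}"
  proof (rule inj_onI)
    fix x y assume x: "x \<in> {d. d dvd p}" and y: "y \<in> {d. d dvd p}" and e: "p div x = p div y"
    have "x * (p div x) = p" "y * (p div y) = p" using x y by simp_all
    moreover have "p div x > 0" using x p by (auto elim!: dvdE)
    ultimately show "x = y" using e by (metis mult_right_cancel neq0_conv)
  qed
  show "(\<lambda>d. p div d) ` {d. d dvd p} \<subseteq> {1..p}"
    using p by (auto elim!: dvdE)
  show "real d / real p = 1 / real (p div d)" if "d \<in> {d. d dvd p}" for d
    using that p by (auto elim!: dvdE)
qed

lemma sum_gcd_sq_le_harm:
  assumes p: "p > 0"
  shows "(\<Sum>k=1..M. real (gcd p k)^2 / (real p * real k)) \<le> harm p * harm M"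
proof -
  define Dv where "Dv = {d. d dvd p}"
  have finD: "finite Dv" unfolding Dv_def using p by simp
  \<comment> \<open>\<open>gcd p k\<close> is one of the divisors of \<open>p\<close> that divide \<open>k\<close>\<close>
  have gcd_le: "real (gcd p k)^2 / (real p * real k)
      \<le> (\<Sum>d\<in>Dv. if d dvd k then real d^2 / (real p * real k) else 0)" for k
  proof -
    have "gcd p k \<in> Dv" unfolding Dv_def by simp
    then show ?thesis
      using member_le_sum[of "gcd p k" Dv "\<lambda>d. if d dvd k then real d^2 / (real p * real k) else 0"] finD
      by simp
  qed
  have "(\<Sum>k=1..M. real (gcd p k)^2 / (real p * real k)) \<le>
        (\<Sum>k=1..M. \<Sum>d\<in>Dv. if d dvd k then real d^2 / (real p * real k) else 0)"
    by (intro sum_mono gcd_le)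
  also have "\<dots> = (\<Sum>d\<in>Dv. \<Sum>k=1..M. if d dvd k then real d^2 / (real p * real k) else 0)"
    by (rule sum.swap)
  also have "\<dots> = (\<Sum>d\<in>Dv. (real d / real p) * (\<Sum>k | k \<in> {1..M} \<and> d dvd k. real d / real k))"
  proof (rule sum.cong[OF refl])
    fix d
    have "(\<Sum>k=1..M. if d dvd k then real d^2 / (real p * real k) else 0) =
          (\<Sum>k | k \<in> {1..M} \<and> d dvd k. (real d / real p) * (real d / real k))"
      by (subst sum.inter_filter[symmetric]) (simp_all add: power2_eq_square)
    then show "(\<Sum>k=1..M. if d dvd k then real d^2 / (real p * real k) else 0) =
          (real d / real p) * (\<Sum>k | k \<in> {1..M} \<and> d dvd k. real d / real k)"
      by (simp add: sum_distrib_left)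
  qed
  also have "\<dots> \<le> (\<Sum>d\<in>Dv. (real d / real p) * harm M)"
  proof (rule sum_mono)
    fix d assume "d \<in> Dv"
    then have "d > 0" using p unfolding Dv_def by (auto intro: Nat.gr0I)
    then show "(real d / real p) * (\<Sum>k | k \<in> {1..M} \<and> d dvd k. real d / real k) \<le> (real d / real p) * harm M"
      by (intro mult_left_mono sum_multiples_le_harm) auto
  qed
  also have "\<dots> = (\<Sum>d\<in>Dv. real d / real p) * harm M" by (simp add: sum_distrib_right)
  also have "\<dots> \<le> harm p * harm M"
    using sum_divisors_le_harm[OF p] harm_nonneg unfolding Dv_def by (intro mult_right_mono) auto
  finally show ?thesis .
qed

lemma sum_franel_le:
  assumes p: "p > 0" "p \<le> N + 1"
  shows "(\<Sum>k=1..N+1. franel p k) \<le> harm (N+1)^2 / 12"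
proof -
  have "(\<Sum>k=1..N+1. franel p k) = (\<Sum>k=1..N+1. real (gcd p k)^2 / (real p * real k)) / 12"
    by (subst sum_divide_distrib) (rule sum.cong, simp, simp add: franel_def ac_simps)
  also have "\<dots> \<le> harm p * harm (N+1) / 12"
    by (rule divide_right_mono[OF sum_gcd_sq_le_harm[OF p(1)]]) simp
  also have "\<dots> \<le> harm (N+1) * harm (N+1) / 12"
    using harm_mono[OF p(2)] harm_nonneg[of "N+1"] by (simp add: mult_right_mono divide_right_mono)
  finally show ?thesis by (simp add: power2_eq_square)
qed

lemma sum_franel_shift_le:
  assumes p: "p > 0" "p \<le> N + 1"
  shows "(\<Sum>n=1..N. franel p n) \<le> harm (N+1)^2 / 12" "(\<Sum>n=1..N. franel p (n+1)) \<le> harm (N+1)^2 / 12"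
proof -
  have "(\<Sum>n=1..N. franel p n) \<le> (\<Sum>k=1..N+1. franel p k)"
    by (rule sum_mono2) (auto simp: franel_nonneg)
  then show "(\<Sum>n=1..N. franel p n) \<le> harm (N+1)^2 / 12" using sum_franel_le[OF p] by linarith
  have "(\<Sum>n=1..N. franel p (n+1)) = (\<Sum>k=Suc 1..Suc N. franel p k)"
    unfolding sum.shift_bounds_cl_Suc_ivl by simp
  also have "\<dots> \<le> (\<Sum>k=1..N+1. franel p k)"
    by (rule sum_mono2) (auto simp: franel_nonneg)
  finally show "(\<Sum>n=1..N. franel p (n+1)) \<le> harm (N+1)^2 / 12" using sum_franel_le[OF p] by linarith
qed

lemma sum_franel_corners_le:
  assumes m: "m > 0" "m \<le> N"
  shows "(\<Sum>n=1..N. franel_corners m n) \<le> harm (N+1)^2"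
proof -
  have "(\<Sum>n=1..N. franel_corners m n) = (\<Sum>n=1..N. franel (m+1) (n+1)) + (\<Sum>n=1..N. franel (m+1) n) + (\<Sum>n=1..N. franel m (n+1)) + (\<Sum>n=1..N. franel m n)"
    unfolding franel_corners_def by (simp add: sum.distrib)
  also have "\<dots> \<le> 4 * (harm (N+1)^2 / 12)"
    using sum_franel_shift_le[of "m+1" N] sum_franel_shift_le[of m N] m by simp
  also have "\<dots> \<le> harm (N+1)^2" by simp
  finally show ?thesis .
qed

lemma integrable_sawtooth_diff_mult: "(\<lambda>\<beta>. sawtooth_diff m \<beta> * sawtooth_diff n \<beta>) integrable_on {0..1}"
proof (rule bounded_borel_integrable_on[where B=1])
  show "(\<lambda>\<beta>. sawtooth_diff m \<beta> * sawtooth_diff n \<beta>) \<in> borel_measurable borel" by measurable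
  show "\<bar>sawtooth_diff m x * sawtooth_diff n x\<bar> \<le> 1" for x
    using abs_sawtooth_diff_le[of m x] abs_sawtooth_diff_le[of n x] by (simp add: abs_mult mult_le_one)
qed

lemma abs_sum_sawtooth_diff_le: "finite A \<Longrightarrow> \<bar>\<Sum>m\<in>A. c m * sawtooth_diff m \<beta>\<bar> \<le> (\<Sum>m\<in>A. \<bar>c m\<bar>)"
proof -
  assume "finite A"
  have "\<bar>\<Sum>m\<in>A. c m * sawtooth_diff m \<beta>\<bar> \<le> (\<Sum>m\<in>A. \<bar>c m * sawtooth_diff m \<beta>\<bar>)" by (rule sum_abs)
  also have "\<dots> \<le> (\<Sum>m\<in>A. \<bar>c m\<bar>)"
    by (rule sum_mono) (simp add: abs_mult mult_left_le abs_sawtooth_diff_le)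
  finally show ?thesis .
qed

lemma integrable_sum_sawtooth_diff_sq:
  assumes "finite A"
  shows "(\<lambda>\<beta>. (\<Sum>m\<in>A. c m * sawtooth_diff m \<beta>)^2) integrable_on {0..1}"
proof (rule bounded_borel_integrable_on[where B="(\<Sum>m\<in>A. \<bar>c m\<bar>)^2"])
  show "(\<lambda>\<beta>. (\<Sum>m\<in>A. c m * sawtooth_diff m \<beta>)^2) \<in> borel_measurable borel" by measurable
  show "\<bar>(\<Sum>m\<in>A. c m * sawtooth_diff m x)^2\<bar> \<le> (\<Sum>m\<in>A. \<bar>c m\<bar>)^2" for x
  proof -
    have "\<bar>\<Sum>m\<in>A. c m * sawtooth_diff m x\<bar> \<le> \<bar>\<Sum>m\<in>A. \<bar>c m\<bar>\<bar>" using abs_sum_sawtooth_diff_le[OF assms, of c x] by simp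
    then have "\<bar>\<Sum>m\<in>A. c m * sawtooth_diff m x\<bar>^2 \<le> (\<Sum>m\<in>A. \<bar>c m\<bar>)^2" by (intro power_mono) auto
    then show ?thesis by simp
  qed
qed

lemma schur_test_symmetric:
  fixes c :: "'i \<Rightarrow> real" and K :: "'i \<Rightarrow> 'i \<Rightarrow> real"
  assumes K_commute: "\<And>m n. K m n = K n m" and K_nonneg: "\<And>m n. K m n \<ge> 0"
    and row: "\<And>m. m \<in> A \<Longrightarrow> (\<Sum>n\<in>A. K m n) \<le> R"
  shows "(\<Sum>m\<in>A. \<Sum>n\<in>A. \<bar>c m * c n\<bar> * K m n) \<le> R * (\<Sum>m\<in>A. (c m)^2)"
proof -
  have "(\<Sum>m\<in>A. \<Sum>n\<in>A. \<bar>c m * c n\<bar> * K m n) \<le> (\<Sum>m\<in>A. \<Sum>n\<in>A. ((c m)^2 / 2 + (c n)^2 / 2) * K m n)"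
  proof (intro sum_mono mult_right_mono[OF _ K_nonneg])
    fix m n
    have "0 \<le> (\<bar>c m\<bar> - \<bar>c n\<bar>)^2" by simp
    then show "\<bar>c m * c n\<bar> \<le> (c m)^2 / 2 + (c n)^2 / 2"
      by (simp add: power2_eq_square algebra_simps abs_mult)
  qed
  also have "\<dots> = (\<Sum>m\<in>A. \<Sum>n\<in>A. (c m)^2 / 2 * K m n) + (\<Sum>m\<in>A. \<Sum>n\<in>A. (c n)^2 / 2 * K m n)"
    by (simp add: distrib_right sum.distrib)
  also have "(\<Sum>m\<in>A. \<Sum>n\<in>A. (c n)^2 / 2 * K m n) = (\<Sum>m\<in>A. \<Sum>n\<in>A. (c m)^2 / 2 * K m n)"
    by (rule trans[OF sum.swap]) (simp add: K_commute)
  also have "(\<Sum>m\<in>A. \<Sum>n\<in>A. (c m)^2 / 2 * K m n) + (\<Sum>m\<in>A. \<Sum>n\<in>A. (c m)^2 / 2 * K m n)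
      = (\<Sum>m\<in>A. (c m)^2 * (\<Sum>n\<in>A. K m n))"
    by (simp add: sum_distrib_left sum_distrib_right sum.distrib[symmetric] mult.commute)
  also have "\<dots> \<le> (\<Sum>m\<in>A. (c m)^2 * R)"
    using row by (intro sum_mono mult_left_mono) auto
  also have "\<dots> = R * (\<Sum>m\<in>A. (c m)^2)" by (simp add: sum_distrib_left mult.commute)
  finally show ?thesis .
qed

lemma integral_sum_sawtooth_diff_sq_le:
  assumes A: "A \<subseteq> {1..N}"
  shows "integral {0..1} (\<lambda>\<beta>. (\<Sum>m\<in>A. c m * sawtooth_diff m \<beta>)^2) \<le> harm (N+1)^2 * (\<Sum>m\<in>A. (c m)^2)"
proof -
  have fin: "finite A" using A finite_subset by blast
  have pos: "m \<in> A \<Longrightarrow> m > 0" for m using A by auto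
  have "integral {0..1} (\<lambda>\<beta>. (\<Sum>m\<in>A. c m * sawtooth_diff m \<beta>)^2)
      = integral {0..1} (\<lambda>\<beta>. \<Sum>m\<in>A. \<Sum>n\<in>A. (c m * c n) * (sawtooth_diff m \<beta> * sawtooth_diff n \<beta>))"
    by (simp add: power2_eq_square sum_product algebra_simps)
  also have "\<dots> = (\<Sum>m\<in>A. \<Sum>n\<in>A. (c m * c n) * integral {0..1} (\<lambda>\<beta>. sawtooth_diff m \<beta> * sawtooth_diff n \<beta>))"
  proof -
    have i1: "(\<lambda>\<beta>. (c m * c n) * (sawtooth_diff m \<beta> * sawtooth_diff n \<beta>)) integrable_on {0..1}" for m n
      using integrable_cmul[OF integrable_sawtooth_diff_mult[of m n], of "c m * c n"] by simp
    have i2: "(\<lambda>\<beta>. \<Sum>n\<in>A. (c m * c n) * (sawtooth_diff m \<beta> * sawtooth_diff n \<beta>)) integrable_on {0..1}" for m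
      by (rule integrable_sum[OF fin]) (rule i1)
    show ?thesis
      by (simp add: integral_sum[OF fin i2] integral_sum[OF fin i1] integral_mult_right)
  qed
  also have "\<dots> \<le> (\<Sum>m\<in>A. \<Sum>n\<in>A. \<bar>c m * c n\<bar> * franel_corners m n)"
  proof (intro sum_mono)
    fix m n assume "m \<in> A" "n \<in> A"
    define I where "I = integral {0..1} (\<lambda>\<beta>. sawtooth_diff m \<beta> * sawtooth_diff n \<beta>)"
    have I_le: "\<bar>I\<bar> \<le> franel_corners m n"
      unfolding I_def using pos \<open>m \<in> A\<close> \<open>n \<in> A\<close> by (intro abs_integral_sawtooth_diff_mult_le) auto
    have "(c m * c n) * I \<le> \<bar>c m * c n\<bar> * \<bar>I\<bar>" by (simp add: abs_mult[symmetric])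
    also have "\<dots> \<le> \<bar>c m * c n\<bar> * franel_corners m n" by (rule mult_left_mono[OF I_le]) simp
    finally show "(c m * c n) * integral {0..1} (\<lambda>\<beta>. sawtooth_diff m \<beta> * sawtooth_diff n \<beta>) \<le> \<bar>c m * c n\<bar> * franel_corners m n"
      unfolding I_def .
  qed
  also have "\<dots> \<le> harm (N+1)^2 * (\<Sum>m\<in>A. (c m)^2)"
  proof (rule schur_test_symmetric[OF franel_corners_commute franel_corners_nonneg])
    fix m assume m: "m \<in> A"
    have "(\<Sum>n\<in>A. franel_corners m n) \<le> (\<Sum>n=1..N. franel_corners m n)" by (rule sum_mono2) (use A in \<open>auto simp: franel_corners_nonneg\<close>)
    also have "\<dots> \<le> harm (N+1)^2" by (rule sum_franel_corners_le) (use A m in auto)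
    finally show "(\<Sum>n\<in>A. franel_corners m n) \<le> harm (N+1)^2" .
  qed
  finally show ?thesis .
qed

lemma cmod_sum_sawtooth_diff_sq:
  "(cmod (\<Sum>m\<in>A. a m * complex_of_real (sawtooth_diff m \<beta>)))^2
       = (\<Sum>m\<in>A. Re (a m) * sawtooth_diff m \<beta>)^2 + (\<Sum>m\<in>A. Im (a m) * sawtooth_diff m \<beta>)^2"
  by (simp add: cmod_power2 Re_sum Im_sum)

lemma borel_measurable_cmod_sum_sawtooth_diff_sq:
  "(\<lambda>\<beta>. (cmod (\<Sum>m\<in>A. a m * complex_of_real (sawtooth_diff m \<beta>)))^2) \<in> borel_measurable borel"
  unfolding cmod_sum_sawtooth_diff_sq by measurable

lemma integrable_cmod_sum_sawtooth_diff_sq: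
  assumes "finite A"
  shows "(\<lambda>\<beta>. (cmod (\<Sum>m\<in>A. a m * complex_of_real (sawtooth_diff m \<beta>)))^2) integrable_on {0..1}"
  unfolding cmod_sum_sawtooth_diff_sq by (intro integrable_add integrable_sum_sawtooth_diff_sq assms)

lemma integral_cmod_sum_sawtooth_diff_sq_le:
  fixes a :: "nat \<Rightarrow> complex"
  assumes A: "A \<subseteq> {1..N}"
  shows "integral {0..1} (\<lambda>\<beta>. (cmod (\<Sum>m\<in>A. a m * complex_of_real (sawtooth_diff m \<beta>)))^2) \<le> harm (N+1)^2 * (\<Sum>m\<in>A. (cmod (a m))^2)"
proof -
  have fin: "finite A" using A finite_subset by blast
  have "integral {0..1} (\<lambda>\<beta>. (cmod (\<Sum>m\<in>A. a m * complex_of_real (sawtooth_diff m \<beta>)))^2)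
     = integral {0..1} (\<lambda>\<beta>. (\<Sum>m\<in>A. Re (a m) * sawtooth_diff m \<beta>)^2) + integral {0..1} (\<lambda>\<beta>. (\<Sum>m\<in>A. Im (a m) * sawtooth_diff m \<beta>)^2)"
    unfolding cmod_sum_sawtooth_diff_sq by (rule integral_add) (rule integrable_sum_sawtooth_diff_sq[OF fin])+
  also have "\<dots> \<le> harm (N+1)^2 * (\<Sum>m\<in>A. (Re (a m))^2) + harm (N+1)^2 * (\<Sum>m\<in>A. (Im (a m))^2)"
    by (intro add_mono integral_sum_sawtooth_diff_sq_le[OF A])
  also have "\<dots> = harm (N+1)^2 * (\<Sum>m\<in>A. (cmod (a m))^2)"
    by (simp add: cmod_power2 sum.distrib distrib_left)
  finally show ?thesis .
qed

section \<open>A dyadic maximal inequality\<close>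

definition block_sum :: "(nat \<Rightarrow> 'a::comm_monoid_add) \<Rightarrow> nat \<Rightarrow> nat \<Rightarrow> 'a" where
  "block_sum b s L = (\<Sum>m\<in>{s<..s+L}. b m)"

definition dyadic_energy :: "(nat \<Rightarrow> 'a::real_normed_vector) \<Rightarrow> nat \<Rightarrow> nat \<Rightarrow> real" where
  "dyadic_energy b u i = (\<Sum>l\<le>i. \<Sum>j<2^(i-l). (norm (block_sum b (u + j*2^l) (2^l)))^2)"

lemma dyadic_energy_nonneg: "dyadic_energy b u i \<ge> 0" unfolding dyadic_energy_def by (intro sum_nonneg) simp

lemma sum_lessThan_double:
  fixes g :: "nat \<Rightarrow> 'a::comm_monoid_add"
  shows "(\<Sum>j<2*T. g j) = (\<Sum>j<T. g j) + (\<Sum>j<T. g (j+T))"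
proof -
  have "(\<Sum>j<2*T. g j) = (\<Sum>j\<in>{0..<T+T}. g j)" by (simp add: atLeast0LessThan mult_2)
  also have "\<dots> = (\<Sum>j\<in>{0..<T}. g j) + (\<Sum>j\<in>{T..<T+T}. g j)"
    by (rule sum.atLeastLessThan_concat[symmetric]) auto
  also have "(\<Sum>j\<in>{T..<T+T}. g j) = (\<Sum>j\<in>{0..<T}. g (j+T))"
    using sum.shift_bounds_nat_ivl[of g 0 T T] by simp
  finally show ?thesis by (simp add: atLeast0LessThan)
qed

lemma block_sum_sq_le_dyadic_energy: "(norm (block_sum b u (2^i)))^2 \<le> dyadic_energy b u i"
proof -
  have "(norm (block_sum b u (2^i)))^2 = (\<Sum>j<2^(i-i). (norm (block_sum b (u + j*2^i) (2^i)))^2)" by simp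
  also have "\<dots> \<le> dyadic_energy b u i" unfolding dyadic_energy_def
    by (rule member_le_sum[of i "{..i}"]) (auto intro: sum_nonneg)
  finally show ?thesis .
qed

lemma dyadic_energy_halves_le: "dyadic_energy b u i + dyadic_energy b (u + 2^i) i \<le> dyadic_energy b u (Suc i)"
proof -
  have "dyadic_energy b u (Suc i) = (\<Sum>l\<le>i. \<Sum>j<2^(Suc i-l). (norm (block_sum b (u + j*2^l) (2^l)))^2) +
            (\<Sum>j<2^(Suc i-Suc i). (norm (block_sum b (u + j*2^Suc i) (2^Suc i)))^2)"
    unfolding dyadic_energy_def by simp
  also have "(\<Sum>l\<le>i. \<Sum>j<2^(Suc i-l). (norm (block_sum b (u + j*2^l) (2^l)))^2) =
     (\<Sum>l\<le>i. (\<Sum>j<2^(i-l). (norm (block_sum b (u + j*2^l) (2^l)))^2) + (\<Sum>j<2^(i-l). (norm (block_sum b (u + 2^i + j*2^l) (2^l)))^2))"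
  proof (rule sum.cong[OF refl])
    fix l assume l: "l \<in> {..i}"
    have p: "(2::nat)^(Suc i - l) = 2 * 2^(i-l)" using l by (simp add: Suc_diff_le)
    have sh: "u + (j + 2^(i-l)) * 2^l = (u + 2^i) + j * 2^l" for j
    proof -
      have "(2::nat)^(i-l) * 2^l = 2^i" using l by (simp add: power_add[symmetric])
      then show ?thesis by (simp add: algebra_simps)
    qed
    show "(\<Sum>j<2^(Suc i-l). (norm (block_sum b (u + j*2^l) (2^l)))^2) =
          (\<Sum>j<2^(i-l). (norm (block_sum b (u + j*2^l) (2^l)))^2) + (\<Sum>j<2^(i-l). (norm (block_sum b (u + 2^i + j*2^l) (2^l)))^2)"
      unfolding p sum_lessThan_double sh by simp
  qed
  also have "\<dots> = dyadic_energy b u i + dyadic_energy b (u + 2^i) i"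
    unfolding dyadic_energy_def by (rule sum.distrib)
  finally show ?thesis by (simp add: sum_nonneg)
qed

lemma dyadic_block_le:
  fixes i j l :: nat
  assumes "l \<le> i" "j < 2^(i-l)"
  shows "j*2^l + 2^l \<le> 2^i"
proof -
  have "(j + 1) * 2^l \<le> 2^(i - l) * (2::nat)^l" using assms(2) by (intro mult_right_mono) auto
  also have "\<dots> = 2^i" using assms(1) by (simp add: power_add[symmetric])
  finally show ?thesis by simp
qed

lemma block_sum_split: "r1 \<le> r \<Longrightarrow> block_sum b u r = block_sum b u r1 + block_sum b (u + r1) (r - r1)"
proof -
  assume r: "r1 \<le> r"
  have "{u<..u+r} = {u<..u+r1} \<union> {u+r1<..u+r}" using r by auto
  then show ?thesis unfolding block_sum_def using r by (simp add: sum.union_disjoint)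
qed

lemma sq_add_le_weighted:
  fixes x y t :: real
  assumes t: "t > 0"
  shows "(x + y)^2 \<le> (t+1) * x^2 + ((t+1)/t) * y^2"
proof -
  have "t * ((t+1) * x^2 + ((t+1)/t) * y^2 - (x + y)^2) = (t * x - y)^2"
    using t by (simp add: field_simps power2_eq_square)
  then have "t * ((t+1) * x^2 + ((t+1)/t) * y^2 - (x + y)^2) \<ge> 0" by simp
  then show ?thesis using t by (simp add: zero_le_mult_iff)
qed

lemma rademacher_menshov_block_sum:
  fixes b :: "nat \<Rightarrow> 'a::real_normed_vector"
  assumes "r \<le> 2^k"
  shows "(norm (block_sum b u r))^2 \<le> (real k + 1) * dyadic_energy b u k"
  using assms
proof (induction k arbitrary: u r)
  case 0
  then have "r = 0 \<or> r = 1" by auto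
  then show ?case
  proof
    assume "r = 0" then show ?thesis by (simp add: block_sum_def dyadic_energy_nonneg)
  next
    assume "r = 1" then show ?thesis by (simp add: dyadic_energy_def)
  qed
next
  case (Suc k)
  show ?case
  proof (cases "r \<le> 2^k")
    case True
    have "(norm (block_sum b u r))^2 \<le> (real k + 1) * dyadic_energy b u k" by (rule Suc.IH[OF True])
    also have "\<dots> \<le> (real (Suc k) + 1) * dyadic_energy b u (Suc k)"
      using dyadic_energy_halves_le[of b u k] dyadic_energy_nonneg[of b u k] dyadic_energy_nonneg[of b "u+2^k" k]
      by (intro mult_mono) auto
    finally show ?thesis .
  next
    case False
    define A where "A = block_sum b u (2^k)"
    define B where "B = block_sum b (u + 2^k) (r - 2^k)"
    have e: "block_sum b u r = A + B" unfolding A_def B_def using False by (intro block_sum_split) simp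
    have hA: "(norm A)^2 \<le> dyadic_energy b u k" unfolding A_def by (rule block_sum_sq_le_dyadic_energy)
    have hB: "(norm B)^2 \<le> (real k + 1) * dyadic_energy b (u + 2^k) k"
      unfolding B_def by (rule Suc.IH) (use Suc.prems in simp)
    have "(norm (block_sum b u r))^2 \<le> (norm A + norm B)^2"
      unfolding e by (intro power_mono norm_triangle_ineq) simp
    also have "\<dots> \<le> (real k + 1 + 1) * (norm A)^2 + ((real k + 1 + 1)/(real k + 1)) * (norm B)^2"
      by (rule sq_add_le_weighted) simp
    also have "\<dots> \<le> (real k + 1 + 1) * dyadic_energy b u k + ((real k + 1 + 1)/(real k + 1)) * ((real k + 1) * dyadic_energy b (u + 2^k) k)"
      by (intro add_mono mult_left_mono hA hB) auto
    also have "\<dots> = (real k + 2) * (dyadic_energy b u k + dyadic_energy b (u + 2^k) k)"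
      by (simp add: field_simps)
    also have "\<dots> \<le> (real (Suc k) + 1) * dyadic_energy b u (Suc k)"
      using dyadic_energy_halves_le[of b u k] by (intro mult_mono) (auto simp: dyadic_energy_nonneg add_nonneg_nonneg)
    finally show ?thesis .
  qed
qed

lemma sum_consecutive_blocks:
  fixes g :: "nat \<Rightarrow> 'a::comm_monoid_add"
  shows "(\<Sum>j<J. \<Sum>m\<in>{s + j*L<..s + (j+1)*L}. g m) = (\<Sum>m\<in>{s<..s + J*L}. g m)"
proof (induction J)
  case 0 then show ?case by simp
next
  case (Suc J)
  have "{s<..s + Suc J * L} = {s<..s + J*L} \<union> {s + J*L<..s + (J+1)*L}" by auto
  then have "(\<Sum>m\<in>{s<..s + Suc J * L}. g m) = (\<Sum>m\<in>{s<..s + J*L}. g m) + (\<Sum>m\<in>{s + J*L<..s + (J+1)*L}. g m)"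
    by (simp add: sum.union_disjoint)
  then show ?case using Suc by simp
qed

section \<open>Beatty sequences and the sawtooth function\<close>

lemma frac_neg_ceiling: "frac (- y) = real_of_int \<lceil>y\<rceil> - (y::real)"
  by (simp add: frac_def ceiling_def)

lemma sawtooth_diff_ceiling: "sawtooth_diff m \<beta> = real_of_int (\<lceil>(real m + 1) * \<beta>\<rceil> - \<lceil>real m * \<beta>\<rceil>) - \<beta>"
  unfolding sawtooth_diff_def sawtooth_def frac_neg_ceiling by (simp add: algebra_simps)

lemma ceiling_add_cases:
  fixes y \<beta> :: real
  assumes "0 \<le> \<beta>" "\<beta> \<le> 1"
  shows "\<lceil>y + \<beta>\<rceil> = \<lceil>y\<rceil> \<or> \<lceil>y + \<beta>\<rceil> = \<lceil>y\<rceil> + 1"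
proof -
  have "\<lceil>y\<rceil> \<le> \<lceil>y + \<beta>\<rceil>" using assms by (intro ceiling_mono) simp
  moreover have "\<lceil>y + \<beta>\<rceil> \<le> \<lceil>y\<rceil> + 1"
    unfolding ceiling_le_iff using assms le_of_int_ceiling[of y] by simp linarith
  ultimately show ?thesis by linarith
qed

lemma beatty_iff_ceiling:
  assumes \<alpha>: "\<alpha> > 1" and m: "m \<ge> 1"
  shows "m \<in> beatty \<alpha> \<longleftrightarrow> \<lceil>(real m + 1) * (1/\<alpha>)\<rceil> = \<lceil>real m * (1/\<alpha>)\<rceil> + 1"
proof -
  define \<beta> where "\<beta> = 1/\<alpha>"
  have b0: "\<beta> > 0" and b1: "\<beta> < 1" using \<alpha> by (auto simp: \<beta>_def)
  define c where "c = \<lceil>real m * \<beta>\<rceil>"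
  define d where "d = \<lceil>(real m + 1) * \<beta>\<rceil>"
  have dc: "d = c \<or> d = c + 1"
    unfolding c_def d_def using ceiling_add_cases[of \<beta> "real m * \<beta>"] b0 b1 by (simp add: algebra_simps)
  \<comment> \<open>\<open>m = \<lfloor>n\<alpha>\<rfloor>\<close> iff the integer \<open>n\<close> lies in \<open>[m\<beta>, (m+1)\<beta>)\<close>, an interval of length \<open>\<beta> < 1\<close>\<close>
  have "m \<in> beatty \<alpha> \<longleftrightarrow> d = c + 1"
  proof
    assume "m \<in> beatty \<alpha>"
    then obtain n where n: "n \<ge> 1" "nat \<lfloor>real n * \<alpha>\<rfloor> = m" unfolding beatty_def by auto
    moreover have "real n * \<alpha> > 0" using n(1) \<alpha> by simp
    ultimately have "\<lfloor>real n * \<alpha>\<rfloor> = int m" by linarith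
    then have "real m \<le> real n * \<alpha>" "real n * \<alpha> < real m + 1" by linarith+
    then have lo: "real m * \<beta> \<le> real n" and hi: "real n < (real m + 1) * \<beta>"
      using \<alpha> by (auto simp: \<beta>_def field_simps)
    have "c \<le> int n" unfolding c_def using lo by (simp add: ceiling_le_iff)
    moreover have "int n < d" unfolding d_def using hi by (simp add: less_ceiling_iff)
    ultimately show "d = c + 1" using dc by linarith
  next
    assume "d = c + 1"
    then have "c < d" by simp
    then have hi: "real_of_int c < (real m + 1) * \<beta>" unfolding d_def by (simp add: less_ceiling_iff)
    have lo: "real m * \<beta> \<le> real_of_int c" unfolding c_def by simp
    have cpos: "c \<ge> 1" unfolding c_def using b0 m by (simp add: one_le_ceiling)
    define n where "n = nat c"
    have "real n = real_of_int c" using cpos by (simp add: n_def)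
    then have "real m \<le> real n * \<alpha>" "real n * \<alpha> < real m + 1"
      using lo hi \<alpha> by (auto simp: \<beta>_def field_simps)
    then have "nat \<lfloor>real n * \<alpha>\<rfloor> = m" by linarith
    moreover have "n \<ge> 1" using cpos by (simp add: n_def)
    ultimately show "m \<in> beatty \<alpha>" unfolding beatty_def by auto
  qed
  then show ?thesis unfolding \<beta>_def c_def d_def .
qed

lemma beatty_indicator_eq:
  assumes \<alpha>: "\<alpha> > 1" and m: "m \<ge> 1"
  shows "(if m \<in> beatty \<alpha> then 1 else 0) - 1/\<alpha> = sawtooth_diff m (1/\<alpha>)"
proof -
  have "\<lceil>(real m + 1) * (1/\<alpha>)\<rceil> = \<lceil>real m * (1/\<alpha>)\<rceil> \<or> \<lceil>(real m + 1) * (1/\<alpha>)\<rceil> = \<lceil>real m * (1/\<alpha>)\<rceil> + 1"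
    using ceiling_add_cases[of "1/\<alpha>" "real m * (1/\<alpha>)"] \<alpha> by (simp add: algebra_simps)
  then show ?thesis using beatty_iff_ceiling[OF assms] unfolding sawtooth_diff_ceiling by auto
qed

definition sawtooth_coeff :: "(nat \<Rightarrow> complex) \<Rightarrow> real \<Rightarrow> nat \<Rightarrow> complex" where
  "sawtooth_coeff f \<beta> m = f m * complex_of_real (sawtooth_diff m \<beta>)"

definition sawtooth_sum :: "(nat \<Rightarrow> complex) \<Rightarrow> real \<Rightarrow> nat \<Rightarrow> complex" where
  "sawtooth_sum f \<beta> X = (\<Sum>m\<in>{1..X}. sawtooth_coeff f \<beta> m)"

lemma beatty_error_eq_sawtooth_sum:
  assumes \<alpha>: "\<alpha> > 1"
  shows "S_beatty \<alpha> f x - S_full f x / complex_of_real \<alpha> = sawtooth_sum f (1/\<alpha>) (nat \<lfloor>x\<rfloor>)"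
proof -
  have "S_beatty \<alpha> f x = (\<Sum>m\<in>{1..nat \<lfloor>x\<rfloor>}. if m \<in> beatty \<alpha> then f m else 0)"
    unfolding S_beatty_def by (rule sum.inter_restrict) simp
  moreover have "S_full f x / complex_of_real \<alpha> = (\<Sum>m\<in>{1..nat \<lfloor>x\<rfloor>}. f m * complex_of_real (1/\<alpha>))"
    unfolding S_full_def by (simp add: divide_complex_def sum_distrib_right)
  ultimately have "S_beatty \<alpha> f x - S_full f x / complex_of_real \<alpha>
     = (\<Sum>m\<in>{1..nat \<lfloor>x\<rfloor>}. f m * complex_of_real ((if m \<in> beatty \<alpha> then 1 else 0) - 1/\<alpha>))"
    by (simp add: sum_subtractf[symmetric] algebra_simps of_real_diff) (intro sum.cong refl, simp)
  also have "\<dots> = sawtooth_sum f (1/\<alpha>) (nat \<lfloor>x\<rfloor>)"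
    unfolding sawtooth_sum_def sawtooth_coeff_def
    by (intro sum.cong refl) (simp add: beatty_indicator_eq[OF \<alpha>])
  finally show ?thesis .
qed

section \<open>The dyadic energy of the sawtooth coefficients\<close>

definition dyadic_mass :: "(nat \<Rightarrow> complex) \<Rightarrow> nat \<Rightarrow> real" where
  "dyadic_mass f j = (\<Sum>m\<in>{1..(2::nat)^j}. (cmod (f m))^2)"

lemma dyadic_mass_nonneg: "dyadic_mass f j \<ge> 0"
  unfolding dyadic_mass_def by (simp add: sum_nonneg)

lemma dyadic_mass_eq_0_iff: "dyadic_mass f j = 0 \<longleftrightarrow> (\<forall>m\<in>{1..2^j}. f m = 0)"
  unfolding dyadic_mass_def by (subst sum_nonneg_eq_0_iff) auto

lemma dyadic_mass_mono: "i \<le> j \<Longrightarrow> dyadic_mass f i \<le> dyadic_mass f j"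
  unfolding dyadic_mass_def by (rule sum_mono2) auto

lemma norm2_upto_pow2: "norm2_upto f (2^r) = sqrt (dyadic_mass f r)"
proof -
  have h: "nat \<lfloor>(2::real)^r\<rfloor> = 2^r"
    by (metis floor_of_nat nat_int of_nat_numeral of_nat_power)
  show ?thesis unfolding norm2_upto_def dyadic_mass_def h ..
qed

lemma norm_le_Mf: "1 \<le> m \<Longrightarrow> m \<le> nat \<lfloor>x\<rfloor> \<Longrightarrow> cmod (f m) \<le> Mf f x"
proof -
  assume "1 \<le> m" "m \<le> nat \<lfloor>x\<rfloor>"
  then have "cmod (f m) \<le> Max ((\<lambda>m. cmod (f m)) ` {1..nat \<lfloor>x\<rfloor>})" by (intro Max_ge) auto
  then show ?thesis unfolding Mf_def by simp
qed

lemma Mf_ge_1: "x \<ge> 1 \<Longrightarrow> Mf f x \<ge> 1"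
proof -
  assume x: "x \<ge> 1"
  have "nat \<lfloor>x\<rfloor> \<ge> 1" using x by linarith
  then have "0 \<le> cmod (f 1)" "cmod (f 1) \<le> Max ((\<lambda>m. cmod (f m)) ` {1..nat \<lfloor>x\<rfloor>})"
    by (auto intro: Max_ge)
  then show ?thesis unfolding Mf_def by linarith
qed

lemma dyadic_mass_le_Mf: "2^k \<le> nat \<lfloor>x\<rfloor> \<Longrightarrow> dyadic_mass f k \<le> 2^k * (Mf f x)^2"
proof -
  assume h: "2^k \<le> nat \<lfloor>x\<rfloor>"
  have "dyadic_mass f k \<le> (\<Sum>m\<in>{1..(2::nat)^k}. (Mf f x)^2)"
    unfolding dyadic_mass_def
  proof (rule sum_mono)
    fix m assume m: "m \<in> {1..(2::nat)^k}"
    then have "m \<le> nat \<lfloor>x\<rfloor>" using h by (meson atLeastAtMost_iff order_trans)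
    then have "cmod (f m) \<le> Mf f x" using m by (intro norm_le_Mf) auto
    then show "(cmod (f m))^2 \<le> (Mf f x)^2" by (intro power_mono) auto
  qed
  then show ?thesis by simp
qed

lemma norm_sawtooth_sum_le_trivial: "cmod (sawtooth_sum f \<beta> (nat \<lfloor>x\<rfloor>)) \<le> real (nat \<lfloor>x\<rfloor>) * Mf f x"
proof -
  have "cmod (sawtooth_sum f \<beta> (nat \<lfloor>x\<rfloor>)) \<le> (\<Sum>m\<in>{1..nat \<lfloor>x\<rfloor>}. cmod (f m))"
    unfolding sawtooth_sum_def sawtooth_coeff_def
    by (rule order_trans[OF norm_sum sum_mono]) (simp add: norm_mult mult_left_le abs_sawtooth_diff_le)
  also have "\<dots> \<le> real (nat \<lfloor>x\<rfloor>) * Mf f x"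
    using sum_bounded_above[of "{1..nat \<lfloor>x\<rfloor>}" "\<lambda>m. cmod (f m)" "Mf f x"] norm_le_Mf by simp
  finally show ?thesis .
qed

definition sawtooth_energy :: "(nat \<Rightarrow> complex) \<Rightarrow> nat \<Rightarrow> real \<Rightarrow> real" where
  "sawtooth_energy f k \<beta> = dyadic_energy (sawtooth_coeff f \<beta>) 0 (Suc k)"

lemma sawtooth_energy_expand: "sawtooth_energy f k \<beta> = (\<Sum>l\<le>Suc k. \<Sum>j<2^(Suc k-l).
     (cmod (\<Sum>m\<in>{j*2^l<..j*2^l + 2^l}. f m * complex_of_real (sawtooth_diff m \<beta>)))^2)"
  unfolding sawtooth_energy_def dyadic_energy_def block_sum_def sawtooth_coeff_def by simp

lemma sawtooth_energy_borel[measurable]: "sawtooth_energy f k \<in> borel_measurable borel"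
  unfolding sawtooth_energy_expand[abs_def]
  by (intro borel_measurable_sum borel_measurable_cmod_sum_sawtooth_diff_sq)

lemma sawtooth_energy_nonneg: "sawtooth_energy f k \<beta> \<ge> 0"
  unfolding sawtooth_energy_def by (rule dyadic_energy_nonneg)

lemma integrable_sawtooth_energy: "sawtooth_energy f k integrable_on {0..1}"
  unfolding sawtooth_energy_expand[abs_def]
  by (intro integrable_sum integrable_cmod_sum_sawtooth_diff_sq) auto

lemma sawtooth_energy_eq_0:
  assumes "dyadic_mass f (Suc k) = 0"
  shows "sawtooth_energy f k \<beta> = 0"
proof -
  have "f m = 0" if "j < 2^(Suc k-l)" "l \<le> Suc k" "j*2^l < m" "m \<le> j*2^l + 2^l" for j l m
    using dyadic_block_le[OF that(2,1)] assms that(3,4) by (auto simp: dyadic_mass_eq_0_iff)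
  then show ?thesis unfolding sawtooth_energy_expand by (intro sum.neutral ballI) auto
qed

lemma partial_sawtooth_sum_sq_le_energy:
  assumes "X \<le> 2^Suc k"
  shows "(cmod (sawtooth_sum f \<beta> X))^2 \<le> (real k + 2) * sawtooth_energy f k \<beta>"
proof -
  have "{0<..0+X} = {1..X}" by auto
  then have "sawtooth_sum f \<beta> X = block_sum (sawtooth_coeff f \<beta>) 0 X"
    unfolding sawtooth_sum_def block_sum_def by simp
  then show ?thesis
    using rademacher_menshov_block_sum[OF assms, of "sawtooth_coeff f \<beta>" 0]
    by (simp add: sawtooth_energy_def add.commute)
qed

lemma integral_sawtooth_energy_le: "integral {0..1} (sawtooth_energy f k) \<le> (real k + 3)^3 * dyadic_mass f (Suc k)"
proof -
  define N where "N = (2::nat)^(Suc k)"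
  have "integral {0..1} (sawtooth_energy f k) = (\<Sum>l\<le>Suc k. \<Sum>j<2^(Suc k-l).
     integral {0..1} (\<lambda>\<beta>. (cmod (\<Sum>m\<in>{j*2^l<..j*2^l + 2^l}. f m * complex_of_real (sawtooth_diff m \<beta>)))^2))"
    unfolding sawtooth_energy_expand[abs_def]
    by (subst integral_sum, simp, intro integrable_sum integrable_cmod_sum_sawtooth_diff_sq, simp, simp)
       (intro sum.cong refl integral_sum integrable_cmod_sum_sawtooth_diff_sq, simp_all)
  also have "\<dots> \<le> (\<Sum>l\<le>Suc k. \<Sum>j<2^(Suc k-l). harm (N+1)^2 * (\<Sum>m\<in>{j*2^l<..j*2^l + 2^l}. (cmod (f m))^2))"
  proof (intro sum_mono integral_cmod_sum_sawtooth_diff_sq_le)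
    fix l j :: nat assume "l \<in> {..Suc k}" and "j \<in> {..<2^(Suc k-l)}"
    then show "{j*2^l<..j*2^l + 2^l} \<subseteq> {1..N}"
      using dyadic_block_le[of l "Suc k" j] by (auto simp: N_def)
  qed
  also have "\<dots> = (\<Sum>l\<le>Suc k. harm (N+1)^2 * dyadic_mass f (Suc k))"
  proof (intro sum.cong refl)
    fix l assume l: "l \<in> {..Suc k}"
    have "(\<Sum>j<2^(Suc k-l). (\<Sum>m\<in>{j*2^l<..j*2^l + 2^l}. (cmod (f m))^2))
        = (\<Sum>j<2^(Suc k-l). (\<Sum>m\<in>{0 + j*2^l<..0 + (j+1)*2^l}. (cmod (f m))^2))"
      by (simp add: algebra_simps)
    also have "\<dots> = (\<Sum>m\<in>{0<..0 + 2^(Suc k-l)*2^l}. (cmod (f m))^2)" by (rule sum_consecutive_blocks)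
    also have "{0<..0 + 2^(Suc k-l)*(2::nat)^l} = {1..N}"
      using l by (auto simp: N_def power_add[symmetric])
    finally show "(\<Sum>j<2^(Suc k-l). harm (N+1)^2 * (\<Sum>m\<in>{j*2^l<..j*2^l + 2^l}. (cmod (f m))^2)) = harm (N+1)^2 * dyadic_mass f (Suc k)"
      by (simp add: sum_distrib_left[symmetric] dyadic_mass_def N_def)
  qed
  also have "\<dots> = (real k + 2) * harm (N+1)^2 * dyadic_mass f (Suc k)" by simp
  also have "\<dots> \<le> (real k + 2) * (real k + 3)^2 * dyadic_mass f (Suc k)"
  proof -
    have "harm (N+1) \<le> (harm (2^(Suc (Suc k))) :: real)" unfolding N_def by (rule harm_mono) simp
    also have "\<dots> \<le> real k + 3" using harm_pow2_le[of "Suc (Suc k)"] by simp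
    finally have "harm (N+1)^2 \<le> (real k + 3)^2" using harm_nonneg by (intro power_mono) auto
    then show ?thesis using dyadic_mass_nonneg[of f "Suc k"] by (intro mult_right_mono mult_left_mono) auto
  qed
  also have "\<dots> \<le> (real k + 3)^3 * dyadic_mass f (Suc k)"
    using dyadic_mass_nonneg[of f "Suc k"] by (intro mult_right_mono) (auto simp: power3_eq_cube power2_eq_square)
  finally show ?thesis .
qed

section \<open>Almost-everywhere bounds\<close>

lemma AE_eventually_less_1_of_summable_integrals:
  fixes Z :: "nat \<Rightarrow> real \<Rightarrow> real"
  assumes int: "\<And>k. Z k integrable_on {0..1}" and nn: "\<And>k \<beta>. Z k \<beta> \<ge> 0"
    and meas: "\<And>k. Z k \<in> borel_measurable borel" and sc: "summable c"
    and bd: "\<And>k. integral {0..1} (Z k) \<le> c k"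
  shows "AE \<beta> in lborel. \<beta> \<in> {0..1} \<longrightarrow> (\<forall>\<^sub>F k in sequentially. Z k \<beta> < 1)"
proof -
  define F where "F = (\<lambda>\<beta>. \<Sum>k. ennreal (indicator {0..1} \<beta> * Z k \<beta>))"
  have c0: "c k \<ge> 0" for k using bd[of k] integral_nonneg[OF int nn] by (meson order_trans)
  have mk: "(\<lambda>\<beta>. ennreal (indicator {0..1} \<beta> * Z k \<beta>)) \<in> borel_measurable lborel" for k
    using meas[of k] by measurable
  have "(\<integral>\<^sup>+ \<beta>. F \<beta> \<partial>lborel) = (\<Sum>k. \<integral>\<^sup>+ \<beta>. ennreal (indicator {0..1} \<beta> * Z k \<beta>) \<partial>lborel)"
    unfolding F_def by (rule nn_integral_suminf[OF mk])
  also have "\<dots> = (\<Sum>k. ennreal (integral {0..1} (Z k)))"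
  proof (intro suminf_cong)
    fix k
    show "(\<integral>\<^sup>+ \<beta>. ennreal (indicator {0..1} \<beta> * Z k \<beta>) \<partial>lborel) = ennreal (integral {0..1} (Z k))"
      by (rule nn_integral_has_integral_lebesgue) (use nn int in \<open>auto simp: integrable_integral\<close>)
  qed
  also have "\<dots> \<le> (\<Sum>k. ennreal (c k))"
    by (intro suminf_le summableI) (simp add: bd ennreal_leI)
  also have "\<dots> < \<infinity>" using ennreal_suminf_neq_top[OF sc c0] by (simp add: top.not_eq_extremum)
  finally have fin: "(\<integral>\<^sup>+ \<beta>. F \<beta> \<partial>lborel) \<noteq> \<infinity>" by simp
  have mF: "F \<in> borel_measurable lborel" unfolding F_def using mk by measurable
  have ae: "AE \<beta> in lborel. F \<beta> \<noteq> \<infinity>" by (rule nn_integral_PInf_AE[OF mF fin])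
  show ?thesis
  proof (rule AE_mp[OF ae], intro AE_I2 impI)
    fix \<beta> :: real assume Fb: "F \<beta> \<noteq> \<infinity>" and b: "\<beta> \<in> {0..1}"
    have "(\<Sum>k. ennreal (Z k \<beta>)) \<noteq> \<infinity>" using Fb b by (simp add: F_def)
    then have "summable (\<lambda>k. Z k \<beta>)" using summable_suminf_not_top[of "\<lambda>k. Z k \<beta>"] nn by auto
    then have "(\<lambda>k. Z k \<beta>) \<longlonglongrightarrow> 0" by (rule summable_LIMSEQ_zero)
    then show "\<forall>\<^sub>F k in sequentially. Z k \<beta> < 1" by (rule order_tendstoD) simp
  qed
qed

lemma summable_inverse_shift_sq: "summable (\<lambda>k. 1 / (real k + 3)^2)"
proof (rule summable_comparison_test'[OF inverse_power_summable[of 2, where 'a=real]])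
  fix n :: nat assume "n \<ge> 1"
  then show "norm (1 / (real n + 3)^2) \<le> inverse (real n ^ 2)"
    by (simp add: field_simps power_mono)
qed simp

lemma add3_le_powr_of_pow2_le:
  fixes X :: nat and k :: nat and \<epsilon> :: real
  assumes e: "\<epsilon> > 0" and k: "2^k \<le> X" and k3: "k \<ge> 3"
  shows "real k + 3 \<le> (9/\<epsilon>) * real X powr (\<epsilon>/3)"
proof -
  have "(1::nat) \<le> 2^k" by simp
  then have "1 \<le> X" using k by linarith
  then have X1: "real X \<ge> 1" by simp
  have kr: "real (2^k) \<le> real X" using k by (simp only: of_nat_le_iff)
  then have kr': "(2::real)^k \<le> real X" by simp
  have "real k * ln 2 = ln (2^k)" by (simp add: ln_realpow)
  also have "\<dots> \<le> ln (real X)" using kr' X1 by (subst ln_le_cancel_iff) auto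
  finally have kl: "real k * ln 2 \<le> ln (real X)" .
  have "real k * (2/3) \<le> real k * ln 2" using ln2_ge_two_thirds by (intro mult_left_mono) auto
  then have "real k \<le> (3/2) * ln (real X)" using kl by linarith
  then have "real k + 3 \<le> 3 * ln (real X)" using k3 by linarith
  also have "\<dots> \<le> 3 * (real X powr (\<epsilon>/3) / (\<epsilon>/3))"
    using ln_powr_bound[OF X1, of "\<epsilon>/3"] e by simp
  also have "\<dots> = (9/\<epsilon>) * real X powr (\<epsilon>/3)" by (simp add: field_simps)
  finally show ?thesis .
qed

lemma AE_sawtooth_energy_eventually_le:
  "AE \<beta> in lborel. \<beta> \<in> {0..1} \<longrightarrow>
     (\<forall>\<^sub>F k in sequentially. sawtooth_energy f k \<beta> \<le> (real k + 3)^5 * dyadic_mass f (Suc k))"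
proof -
  define W where "W k = (real k + 3)^5 * dyadic_mass f (Suc k)" for k
  define Z where "Z k \<beta> = (1 / W k) * sawtooth_energy f k \<beta>" for k \<beta>
  have W0: "W k \<ge> 0" for k unfolding W_def using dyadic_mass_nonneg by simp
  have Z_integrable: "Z k integrable_on {0..1}" for k
    unfolding Z_def using integrable_cmul[OF integrable_sawtooth_energy[of f k], of "1 / W k"] by simp
  have Z_nonneg: "Z k \<beta> \<ge> 0" for k \<beta>
    unfolding Z_def using W0 sawtooth_energy_nonneg by simp
  have Z_borel: "Z k \<in> borel_measurable borel" for k
    unfolding Z_def by measurable
  have Z_integral: "integral {0..1} (Z k) \<le> 1 / (real k + 3)^2" for k
  proof -
    have "integral {0..1} (Z k) = (1 / W k) * integral {0..1} (sawtooth_energy f k)"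
      unfolding Z_def by (rule integral_mult_right)
    also have "\<dots> \<le> (1 / W k) * ((real k + 3)^3 * dyadic_mass f (Suc k))"
      using W0 by (intro mult_left_mono integral_sawtooth_energy_le) auto
    also have "\<dots> \<le> 1 / (real k + 3)^2"
    proof (cases "dyadic_mass f (Suc k) = 0")
      case False
      then have "dyadic_mass f (Suc k) > 0" using dyadic_mass_nonneg[of f "Suc k"] by simp
      moreover have "(real k + 3)^5 = (real k + 3)^3 * (real k + 3)^2" by (simp add: power_add[symmetric])
      ultimately show ?thesis unfolding W_def by (simp add: divide_simps)
    qed (simp add: W_def)
    finally show ?thesis .
  qed
  have "AE \<beta> in lborel. \<beta> \<in> {0..1} \<longrightarrow> (\<forall>\<^sub>F k in sequentially. Z k \<beta> < 1)"
    by (rule AE_eventually_less_1_of_summable_integrals[OF Z_integrable Z_nonneg Z_borel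
          summable_inverse_shift_sq Z_integral])
  then have "AE \<beta> in lborel. \<beta> \<in> {0..1} \<longrightarrow> (\<forall>\<^sub>F k in sequentially. sawtooth_energy f k \<beta> \<le> W k)"
  proof (rule AE_mp, intro AE_I2 impI)
    fix \<beta> :: real
    assume "\<beta> \<in> {0..1} \<longrightarrow> (\<forall>\<^sub>F k in sequentially. Z k \<beta> < 1)" and "\<beta> \<in> {0..1}"
    then have "\<forall>\<^sub>F k in sequentially. Z k \<beta> < 1" by simp
    then show "\<forall>\<^sub>F k in sequentially. sawtooth_energy f k \<beta> \<le> W k"
    proof (rule eventually_mono)
      fix k assume Z: "Z k \<beta> < 1"
      show "sawtooth_energy f k \<beta> \<le> W k"
      proof (cases "W k = 0")
        case True
        then show ?thesis using sawtooth_energy_eq_0[of f k \<beta>] by (simp add: W_def)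
      next
        case False
        then show ?thesis using Z W0[of k] by (simp add: Z_def field_simps)
      qed
    qed
  qed
  then show ?thesis by (simp add: W_def)
qed

lemma norm_sawtooth_sum_le_of_energy:
  fixes \<epsilon> K M :: real
  assumes \<epsilon>: "\<epsilon> > 0" and K: "K > 0" and M: "M \<ge> 0"
    and k: "k \<ge> 3" "2^k \<le> X" "X < 2^Suc k"
    and energy: "sawtooth_energy f k \<beta> \<le> (real k + 3)^5 * dyadic_mass f (Suc k)"
    and doubling: "dyadic_mass f (Suc k) \<le> K * dyadic_mass f k"
    and mass: "dyadic_mass f k \<le> 2^k * M^2"
  shows "cmod (sawtooth_sum f \<beta> X) \<le> (9/\<epsilon>)^3 * sqrt K * real X powr (1/2+\<epsilon>) * M"
proof -
  have X0: "real X > 0" using k(2) less_le_trans[of 0 "2^k" X] by simp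
  have "sawtooth_energy f k \<beta> \<le> (real k + 3)^5 * (K * dyadic_mass f k)"
    using order_trans[OF energy mult_left_mono[OF doubling]] by simp
  also have "\<dots> \<le> (real k + 3)^5 * (K * (2^k * M^2))"
    using K mass by (intro mult_left_mono) auto
  finally have E: "sawtooth_energy f k \<beta> \<le> (real k + 3)^5 * (K * (2^k * M^2))" .
  have "(cmod (sawtooth_sum f \<beta> X))^2 \<le> (real k + 2) * sawtooth_energy f k \<beta>"
    using k(3) by (intro partial_sawtooth_sum_sq_le_energy) simp
  also have "\<dots> \<le> (real k + 3) * ((real k + 3)^5 * (K * (2^k * M^2)))"
    using E sawtooth_energy_nonneg[of f k \<beta>] by (intro mult_mono) auto
  also have "\<dots> = (real k + 3)^6 * K * 2^k * M^2" by (simp add: eval_nat_numeral mult_ac)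
  also have "\<dots> \<le> ((9/\<epsilon>) * real X powr (\<epsilon>/3))^6 * K * real X * M^2"
  proof -
    have "(real k + 3)^6 \<le> ((9/\<epsilon>) * real X powr (\<epsilon>/3))^6"
      by (intro power_mono add3_le_powr_of_pow2_le[OF \<epsilon> k(2,1)]) auto
    moreover have "(2::real)^k \<le> real X" using k(2) by (metis of_nat_le_iff of_nat_numeral of_nat_power)
    ultimately show ?thesis using K by (intro mult_mono mult_right_mono) auto
  qed
  also have "\<dots> = ((9/\<epsilon>)^3 * sqrt K * real X powr (1/2+\<epsilon>) * M)^2"
  proof -
    have p6: "(real X powr (\<epsilon>/3))^6 = real X powr (2*\<epsilon>)" using X0 by (simp add: powr_power)
    have p2: "(real X powr (1/2+\<epsilon>))^2 = real X * real X powr (2*\<epsilon>)"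
      using X0 by (simp add: powr_power powr_add algebra_simps)
    have sK: "(sqrt K)^2 = K" using K by simp
    have n: "((9/\<epsilon>)^3)^2 = (9/\<epsilon>)^6" by (simp add: power_mult[symmetric])
    have "((9/\<epsilon>) * real X powr (\<epsilon>/3))^6 * K * real X * M^2
        = (9/\<epsilon>)^6 * real X powr (2*\<epsilon>) * K * real X * M^2"
      by (simp only: power_mult_distrib p6)
    also have "\<dots> = ((9/\<epsilon>)^3)^2 * (sqrt K)^2 * (real X powr (1/2+\<epsilon>))^2 * M^2"
      by (simp only: n sK p2) (simp add: mult_ac)
    finally show ?thesis by (simp only: power_mult_distrib)
  qed
  finally show ?thesis by (rule power2_le_imp_le) (use \<epsilon> K M in simp)
qed

lemma sawtooth_sum_bound_of_energy:
  fixes \<epsilon> K :: real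
  assumes \<epsilon>: "\<epsilon> > 0" and K: "K > 0"
    and energy: "\<And>k. k \<ge> k0 \<Longrightarrow> sawtooth_energy f k \<beta> \<le> (real k + 3)^5 * dyadic_mass f (Suc k)"
    and doubling: "\<And>k. k \<ge> k0 \<Longrightarrow> dyadic_mass f (Suc k) \<le> K * dyadic_mass f k"
  shows "\<exists>C>0. \<forall>x\<ge>8. cmod (sawtooth_sum f \<beta> (nat \<lfloor>x\<rfloor>)) \<le> C * x powr (1/2+\<epsilon>) * Mf f x"
proof -
  define k1 where "k1 = max k0 3"
  define C where "C = 2^k1 + (9/\<epsilon>)^3 * sqrt K"
  have C: "C \<ge> 2^k1" "C > 0" unfolding C_def using \<epsilon> K by (auto intro: add_pos_nonneg)
  have "cmod (sawtooth_sum f \<beta> (nat \<lfloor>x\<rfloor>)) \<le> C * x powr (1/2+\<epsilon>) * Mf f x" if x: "x \<ge> 8" for x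
  proof -
    define X where "X = nat \<lfloor>x\<rfloor>"
    have X1: "X \<ge> 1" and Xx: "real X \<le> x" unfolding X_def using x by linarith+
    have M1: "Mf f x \<ge> 1" using x by (intro Mf_ge_1) simp
    have xp1: "x powr (1/2+\<epsilon>) \<ge> 1" using x \<epsilon> by (intro ge_one_powr_ge_zero) auto
    obtain k where k: "2^k \<le> X" "X < 2^Suc k" using ex_power_ivl1[of 2 X] X1 by auto
    show ?thesis
    proof (cases "k \<ge> k1")
      case True
      have "cmod (sawtooth_sum f \<beta> X) \<le> (9/\<epsilon>)^3 * sqrt K * real X powr (1/2+\<epsilon>) * Mf f x"
        using True k M1 by (intro norm_sawtooth_sum_le_of_energy[OF \<epsilon> K] energy doubling dyadic_mass_le_Mf)
          (auto simp: k1_def X_def)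
      also have "\<dots> \<le> (9/\<epsilon>)^3 * sqrt K * x powr (1/2+\<epsilon>) * Mf f x"
        using \<epsilon> K M1 Xx X1 by (intro mult_right_mono mult_left_mono powr_mono2) auto
      also have "\<dots> \<le> C * x powr (1/2+\<epsilon>) * Mf f x"
        unfolding C_def using xp1 M1 by (intro mult_right_mono) auto
      finally show ?thesis by (simp add: X_def)
    next
      case False
      then have "X < 2^k1" using k(2) power_increasing[of "Suc k" k1 "2::nat"] by auto
      then have X_le: "real X \<le> 2^k1" by (metis less_imp_le of_nat_le_iff of_nat_numeral of_nat_power)
      have "cmod (sawtooth_sum f \<beta> X) \<le> real X * Mf f x"
        unfolding X_def by (rule norm_sawtooth_sum_le_trivial)
      also have "\<dots> \<le> C * 1 * Mf f x" using X_le C M1 by (intro mult_right_mono) linarith+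
      also have "\<dots> \<le> C * x powr (1/2+\<epsilon>) * Mf f x"
        using xp1 C M1 by (intro mult_right_mono mult_left_mono) auto
      finally show ?thesis by (simp add: X_def)
    qed
  qed
  then show ?thesis using C(2) by blast
qed

lemma AE_sawtooth_sum_bound:
  fixes K :: real
  assumes K: "K > 0"
    and doubling: "\<forall>\<^sub>F k in sequentially. dyadic_mass f (Suc k) \<le> K * dyadic_mass f k"
  shows "AE \<beta> in lborel. \<beta> \<in> {0..1} \<longrightarrow> (\<forall>\<epsilon>>0. \<exists>C>0. \<forall>x\<ge>8.
           cmod (sawtooth_sum f \<beta> (nat \<lfloor>x\<rfloor>)) \<le> C * x powr (1/2+\<epsilon>) * Mf f x)"
proof (rule AE_mp[OF AE_sawtooth_energy_eventually_le], intro AE_I2 impI allI)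
  fix \<beta> \<epsilon> :: real
  assume energy: "\<beta> \<in> {0..1} \<longrightarrow>
      (\<forall>\<^sub>F k in sequentially. sawtooth_energy f k \<beta> \<le> (real k + 3)^5 * dyadic_mass f (Suc k))"
    and "\<beta> \<in> {0..1}" and \<epsilon>: "\<epsilon> > 0"
  then have "\<forall>\<^sub>F k in sequentially. sawtooth_energy f k \<beta> \<le> (real k + 3)^5 * dyadic_mass f (Suc k)
      \<and> dyadic_mass f (Suc k) \<le> K * dyadic_mass f k"
    using doubling by (simp add: eventually_conj)
  then obtain k0 where "\<And>k. k \<ge> k0 \<Longrightarrow> sawtooth_energy f k \<beta> \<le> (real k + 3)^5 * dyadic_mass f (Suc k)
      \<and> dyadic_mass f (Suc k) \<le> K * dyadic_mass f k"
    by (auto simp: eventually_sequentially)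
  then show "\<exists>C>0. \<forall>x\<ge>8. cmod (sawtooth_sum f \<beta> (nat \<lfloor>x\<rfloor>)) \<le> C * x powr (1/2+\<epsilon>) * Mf f x"
    by (intro sawtooth_sum_bound_of_energy[OF \<epsilon> K]) auto
qed

lemma eventually_dyadic_mass_doubling:
  assumes "limsup (\<lambda>r::nat. ereal (norm2_upto f (2 ^ (r + 1)) / norm2_upto f (2 ^ r))) < \<infinity>"
  shows "\<exists>K>0. \<forall>\<^sub>F k in sequentially. dyadic_mass f (Suc k) \<le> K * dyadic_mass f k"
proof -
  from assms obtain n :: nat
    where "limsup (\<lambda>r::nat. ereal (norm2_upto f (2 ^ (r + 1)) / norm2_upto f (2 ^ r))) < ereal (real n)"
    using less_PInf_Ex_of_nat by auto
  then have "\<forall>\<^sub>F k in sequentially. ereal (norm2_upto f (2 ^ (k + 1)) / norm2_upto f (2 ^ k)) < ereal (real n)"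
    by (rule Limsup_lessD)
  then have ratio: "\<forall>\<^sub>F k in sequentially. sqrt (dyadic_mass f (Suc k)) < real n * sqrt (dyadic_mass f k)
      \<or> dyadic_mass f k = 0"
  proof (rule eventually_mono)
    fix k assume "ereal (norm2_upto f (2 ^ (k + 1)) / norm2_upto f (2 ^ k)) < ereal (real n)"
    then have ratio_k: "sqrt (dyadic_mass f (Suc k)) / sqrt (dyadic_mass f k) < real n"
      unfolding Suc_eq_plus1 by (simp only: norm2_upto_pow2 less_ereal.simps(1))
    show "sqrt (dyadic_mass f (Suc k)) < real n * sqrt (dyadic_mass f k) \<or> dyadic_mass f k = 0"
    proof (cases "dyadic_mass f k = 0")
      case False
      then have "sqrt (dyadic_mass f k) > 0" using dyadic_mass_nonneg[of f k] by simp
      then show ?thesis using ratio_k by (simp add: pos_divide_less_eq)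
    qed simp
  qed
  define K where "K = (real n)^2 + 1"
  have "\<forall>\<^sub>F k in sequentially. dyadic_mass f (Suc k) \<le> K * dyadic_mass f k"
  proof (cases "\<forall>j. dyadic_mass f j = 0")
    case True
    then show ?thesis by simp
  next
    case False
    then obtain j where "dyadic_mass f j \<noteq> 0" by blast
    then have "dyadic_mass f j > 0" using dyadic_mass_nonneg[of f j] by simp
    then have "\<forall>\<^sub>F k in sequentially. dyadic_mass f k > 0"
      unfolding eventually_sequentially using less_le_trans[OF _ dyadic_mass_mono] by blast
    with ratio show ?thesis
    proof (eventually_elim)
      case (elim k)
      then have "(sqrt (dyadic_mass f (Suc k)))^2 \<le> (real n * sqrt (dyadic_mass f k))^2"
        using dyadic_mass_nonneg[of f "Suc k"] by (intro power_mono) auto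
      then have "dyadic_mass f (Suc k) \<le> (real n)^2 * dyadic_mass f k"
        using elim dyadic_mass_nonneg[of f "Suc k"] by (simp add: power_mult_distrib)
      also have "\<dots> \<le> K * dyadic_mass f k" using elim by (intro mult_right_mono) (auto simp: K_def)
      finally show ?case .
    qed
  qed
  moreover have "K > 0" unfolding K_def by (simp add: add_nonneg_pos)
  ultimately show ?thesis by blast
qed

lemma null_sets_inverse_greaterThan_1:
  assumes N: "N \<in> null_sets lborel"
  shows "{\<alpha>::real \<in> {1<..}. 1/\<alpha> \<in> N} \<in> null_sets lborel"
proof -
  define Z where "Z = {\<alpha>::real \<in> {1<..}. 1/\<alpha> \<in> N}"
  have NS: "N \<in> sets borel" using N by (simp add: null_sets_def)
  have m: "(\<lambda>\<alpha>::real. 1/\<alpha>) \<in> borel_measurable borel" by measurable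
  have "Z = (\<lambda>\<alpha>. 1/\<alpha>) -` N \<inter> {1<..}" unfolding Z_def by auto
  then have ZS: "Z \<in> sets lborel"
    using measurable_sets_borel[OF m NS] by auto
  have negN: "negligible N"
    using null_sets_completionI[OF N] by (simp add: negligible_iff_null_sets)
  have "negligible ((\<lambda>t::real. 1/t) ` (N \<inter> {0<..}))"
  proof (rule negligible_differentiable_image_negligible)
    show "negligible (N \<inter> {0<..})" using negN by (rule negligible_subset) auto
    show "(\<lambda>t::real. 1/t) differentiable_on N \<inter> {0<..}"
      unfolding differentiable_on_def by (auto intro!: derivative_eq_intros simp: field_differentiable_def[symmetric] differentiable_def)
  qed simp
  moreover have "Z \<subseteq> (\<lambda>t::real. 1/t) ` (N \<inter> {0<..})"
  proof
    fix \<alpha> assume "\<alpha> \<in> Z"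
    then have a: "\<alpha> > 1" "1/\<alpha> \<in> N" by (auto simp: Z_def)
    then have "\<alpha> = 1 / (1/\<alpha>)" "1/\<alpha> \<in> N \<inter> {0<..}" by auto
    then show "\<alpha> \<in> (\<lambda>t::real. 1/t) ` (N \<inter> {0<..})" by blast
  qed
  ultimately have "negligible Z" by (rule negligible_subset)
  then have "Z \<in> null_sets lebesgue" by (simp add: negligible_iff_null_sets)
  then show ?thesis using ZS null_sets_completion_iff unfolding Z_def by blast
qed

theorem mainTheorem2:
  fixes f :: "nat \<Rightarrow> complex"
  assumes "limsup (\<lambda>r::nat. ereal (norm2_upto f (2 ^ (r + 1)) / norm2_upto f (2 ^ r))) < \<infinity>"
  shows "\<exists>G. G \<subseteq> {1<..} \<and> ({1<..} - G) \<in> null_sets lborel \<and>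
           (\<forall>\<alpha>\<in>G. \<forall>\<epsilon>>0. \<exists>C>0. \<forall>x::real. x \<ge> 8 \<longrightarrow>
              cmod (S_beatty \<alpha> f x - S_full f x / complex_of_real \<alpha>)
                \<le> C * x powr (1/2 + \<epsilon>) * Mf f x)"
proof -
  obtain K where K: "K > 0"
    and doubling: "\<forall>\<^sub>F k in sequentially. dyadic_mass f (Suc k) \<le> K * dyadic_mass f k"
    using eventually_dyadic_mass_doubling[OF assms] by blast
  define P where "P \<beta> \<longleftrightarrow> (\<forall>\<epsilon>>0. \<exists>C>0. \<forall>x\<ge>8.
      cmod (sawtooth_sum f \<beta> (nat \<lfloor>x\<rfloor>)) \<le> C * x powr (1/2+\<epsilon>) * Mf f x)" for \<beta>
  have "AE \<beta> in lborel. \<beta> \<in> {0..1} \<longrightarrow> P \<beta>"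
    unfolding P_def by (rule AE_sawtooth_sum_bound[OF K doubling])
  then obtain N where N_sub: "{\<beta> \<in> space lborel. \<not> (\<beta> \<in> {0..1} \<longrightarrow> P \<beta>)} \<subseteq> N"
    and "emeasure lborel N = 0" "N \<in> sets lborel"
    by (rule AE_E)
  then have N: "N \<in> null_sets lborel" by (simp add: null_sets_def)
  define G where "G = {\<alpha> \<in> {1<..}. 1/\<alpha> \<notin> N}"
  have "{1<..} - G = {\<alpha> \<in> {1<..}. 1/\<alpha> \<in> N}" unfolding G_def by auto
  moreover have "P (1/\<alpha>)" if "\<alpha> \<in> G" for \<alpha>
  proof -
    have "1/\<alpha> \<in> {0..1}" "1/\<alpha> \<notin> N" using that by (auto simp: G_def)
    then show ?thesis using N_sub unfolding space_lborel space_borel by blast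
  qed
  ultimately show ?thesis
    using null_sets_inverse_greaterThan_1[OF N]
    by (intro exI[of _ G]) (auto simp: G_def P_def beatty_error_eq_sawtooth_sum)
qed

end
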